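(* There is an absolute constant $K$ such that for all $\gamma\in(0,1)$ and integers $n\ge p\ge2$, $k\ge1$, $b\ge1$ with $k\le n/b$, the quantity $\mathcal{E}(B_\gamma^{(p)},C_\gamma^{(p)})$ is at most $K$ times $$\begin{cases}\frac{\sqrt k\,p^{1/2-\gamma}}{1/2-\gamma}+\frac1\gamma\sqrt{\frac{nk}{b}}+\sqrt{\frac{kp}{\gamma(1/2-\gamma)b}}+p^{-\gamma}\sqrt{\frac{nk}{1/2-\gamma}}, & 0<\gamma<\tfrac12,\\[4pt] \sqrt k\log p+\sqrt{\frac{nk}{b}}+\sqrt{\frac{kp\log p}{b}}+\sqrt{\frac{nk\log p}{p}}, & \gamma=\tfrac12,\\[4pt] \frac{\sqrt k\,p^{\gamma-1/2}}{(\gamma-1/2)\sqrt{1-\gamma}}+\sqrt{\frac{nk}{b}}+\frac{\sqrt k\,p^\gamma}{(1-\gamma)\sqrt{(\gamma-1/2)b}}+\sqrt{\frac{(1-\gamma)nk}{(\gamma-1/2)p}}, & \tfrac12<\gamma<1.\end{cases}$$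
   Context: $\log$ is the natural logarithm. $E\in\mathbb{R}^{n\times n}$ is the prefix-sum matrix ($E_{ij}=1$ if $i\ge j$, else $0$). $(\tilde c_\gamma)_i:=(-1)^i\binom{\gamma}{i}$ with $\binom{\gamma}{i}=\prod_{j=1}^{i}\frac{\gamma+1-j}{j}$. $(C_\gamma^{(p)})^{-1}$ is the $n\times n$ lower-triangular Toeplitz matrix whose $r$-th subdiagonal ($r=0$ the main diagonal) equals $(\tilde c_\gamma)_r$ for $r\le p-1$ and $0$ for $r\ge p$; $C_\gamma^{(p)}$ is its inverse and $B_\gamma^{(p)}:=E(C_\gamma^{(p)})^{-1}$. For an $n\times n$ matrix $C$ and integers $k,b\ge1$ with $(k-1)b\le n-1$, $\mathrm{sens}_{k,b}(C):=\bigl\|\sum_{j=0}^{k-1}C_{[\cdot,jb]}\bigr\|_2$, where $C_{[\cdot,m]}$ is the $m$-th column with columns indexed from $0$. The RMSE is $\mathcal{E}(B,C):=\|B\|_F\cdot\mathrm{sens}_{k,b}(C)/\sqrt n$. *)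

theory Defs
  imports "HOL-Analysis.Analysis"
begin

text \<open>n x n real matrices are represented as functions nat => nat => real, with
 indices 0..n-1 (entries outside are irrelevant / taken to be 0).\<close>

definition ctil :: "real \<Rightarrow> nat \<Rightarrow> real" where
  "ctil \<gamma> i = (-1) ^ i * (\<gamma> gchoose i)"

definition Emat :: "nat \<Rightarrow> nat \<Rightarrow> nat \<Rightarrow> real" where
  "Emat n i j = (if i < n \<and> j < n \<and> j \<le> i then 1 else 0)"

definition Cinv :: "nat \<Rightarrow> real \<Rightarrow> nat \<Rightarrow> nat \<Rightarrow> nat \<Rightarrow> real" where
  "Cinv n \<gamma> p i j = (if i < n \<and> j < n \<and> j \<le> i \<and> i - j \<le> p - 1 then ctil \<gamma> (i - j) else 0)"

definition matmul :: "nat \<Rightarrow> (nat \<Rightarrow> nat \<Rightarrow> real) \<Rightarrow> (nat \<Rightarrow> nat \<Rightarrow> real) \<Rightarrow> nat \<Rightarrow> nat \<Rightarrow> real" where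
  "matmul n A B i j = (if i < n \<and> j < n then (\<Sum>l<n. A i l * B l j) else 0)"

definition is_inverse :: "nat \<Rightarrow> (nat \<Rightarrow> nat \<Rightarrow> real) \<Rightarrow> (nat \<Rightarrow> nat \<Rightarrow> real) \<Rightarrow> bool" where
  "is_inverse n A C \<longleftrightarrow> (\<forall>i j. (n \<le> i \<or> n \<le> j) \<longrightarrow> C i j = 0) \<and>
     (\<forall>i<n. \<forall>j<n. (\<Sum>l<n. A i l * C l j) = (if i = j then 1 else 0)) \<and>
     (\<forall>i<n. \<forall>j<n. (\<Sum>l<n. C i l * A l j) = (if i = j then 1 else 0))"

definition Cmat :: "nat \<Rightarrow> real \<Rightarrow> nat \<Rightarrow> nat \<Rightarrow> nat \<Rightarrow> real" where
  "Cmat n \<gamma> p = (THE C. is_inverse n (Cinv n \<gamma> p) C)"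

definition Bmat :: "nat \<Rightarrow> real \<Rightarrow> nat \<Rightarrow> nat \<Rightarrow> nat \<Rightarrow> real" where
  "Bmat n \<gamma> p = matmul n (Emat n) (Cinv n \<gamma> p)"

definition frob :: "nat \<Rightarrow> (nat \<Rightarrow> nat \<Rightarrow> real) \<Rightarrow> real" where
  "frob n A = sqrt (\<Sum>i<n. \<Sum>j<n. (A i j)\<^sup>2)"

definition sens :: "nat \<Rightarrow> nat \<Rightarrow> nat \<Rightarrow> (nat \<Rightarrow> nat \<Rightarrow> real) \<Rightarrow> real" where
  "sens n k b C = sqrt (\<Sum>i<n. (\<Sum>j<k. C i (j * b))\<^sup>2)"

definition rmse :: "nat \<Rightarrow> nat \<Rightarrow> nat \<Rightarrow> (nat \<Rightarrow> nat \<Rightarrow> real) \<Rightarrow> (nat \<Rightarrow> nat \<Rightarrow> real) \<Rightarrow> real" where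
  "rmse n k b B C = frob n B * sens n k b C / sqrt (real n)"

definition bound :: "nat \<Rightarrow> nat \<Rightarrow> nat \<Rightarrow> nat \<Rightarrow> real \<Rightarrow> real" where
  "bound n p k b \<gamma> =
    (if \<gamma> < 1/2 then
       sqrt k * p powr (1/2 - \<gamma>) / (1/2 - \<gamma>) + (1/\<gamma>) * sqrt (n * k / b)
       + sqrt (k * p / (\<gamma> * (1/2 - \<gamma>) * b)) + p powr (-\<gamma>) * sqrt (n * k / (1/2 - \<gamma>))
     else if \<gamma> = 1/2 then
       sqrt k * ln p + sqrt (n * k / b) + sqrt (k * p * ln p / b) + sqrt (n * k * ln p / p)
     else
       sqrt k * p powr (\<gamma> - 1/2) / ((\<gamma> - 1/2) * sqrt (1 - \<gamma>)) + sqrt (n * k / b)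
       + sqrt k * p powr \<gamma> / ((1 - \<gamma>) * sqrt ((\<gamma> - 1/2) * b))
       + sqrt ((1 - \<gamma>) * n * k / ((\<gamma> - 1/2) * p)))"

end

theory Submission
  imports Defs "HOL-Computational_Algebra.Formal_Power_Series"
begin

definition toeplitz :: "nat \<Rightarrow> (nat \<Rightarrow> real) \<Rightarrow> nat \<Rightarrow> nat \<Rightarrow> real" where
  "toeplitz n f i j = (if i < n \<and> j < n \<and> j \<le> i then f (i - j) else 0)"

lemma sum_toeplitz_mult:
  assumes "i < n" "j < n"
  shows "(\<Sum>l<n. toeplitz n f i l * toeplitz n g l j) = toeplitz n (fps_nth (Abs_fps f * Abs_fps g)) i j"
proof (cases "j \<le> i")
  case True
  have "(\<Sum>l<n. toeplitz n f i l * toeplitz n g l j) = (\<Sum>l\<in>{j..i}. f (i - l) * g (l - j))"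
    using assms by (intro sum.mono_neutral_cong_right) (auto simp: toeplitz_def)
  also have "\<dots> = (\<Sum>d\<in>{0..i - j}. f d * g (i - j - d))"
    by (rule sum.reindex_bij_witness[of _ "\<lambda>d. i - d" "\<lambda>l. i - l"]) (use True in auto)
  finally show ?thesis
    using assms True by (simp add: toeplitz_def fps_mult_nth)
next
  case False
  then show ?thesis by (auto simp: toeplitz_def intro!: sum.neutral)
qed

lemma is_inverse_unique:
  assumes "is_inverse n A C" "is_inverse n A C'"
  shows "C' = C"
proof (intro ext)
  fix i j
  show "C' i j = C i j"
  proof (cases "i < n \<and> j < n")
    case False
    then show ?thesis using assms unfolding is_inverse_def by auto
  next
    case True
    have "C' i j = (\<Sum>l<n. C' i l * (if l = j then 1 else 0))"
      using True by (simp add: if_distrib cong: if_cong)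
    also have "\<dots> = (\<Sum>l<n. C' i l * (\<Sum>m<n. A l m * C m j))"
      using True assms(1) unfolding is_inverse_def by (intro sum.cong) auto
    also have "\<dots> = (\<Sum>l<n. \<Sum>m<n. C' i l * A l m * C m j)"
      by (simp add: sum_distrib_left mult.assoc)
    also have "\<dots> = (\<Sum>m<n. (\<Sum>l<n. C' i l * A l m) * C m j)"
      by (subst sum.swap) (simp add: sum_distrib_right)
    also have "\<dots> = (\<Sum>m<n. (if i = m then 1 else 0) * C m j)"
      using True assms(2) unfolding is_inverse_def by (intro sum.cong) auto
    also have "\<dots> = C i j" using True by (simp add: if_distrib[of "\<lambda>x. x * _"] cong: if_cong)
    finally show ?thesis .
  qed
qed

lemma is_inverse_toeplitz:
  assumes "Abs_fps f * Abs_fps g = 1"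
  shows "is_inverse n (toeplitz n f) (toeplitz n g)"
proof -
  have "Abs_fps g * Abs_fps f = 1" using assms by (simp add: mult.commute)
  moreover have "toeplitz n (fps_nth 1) i j = (if i = j then 1 else 0)" if "i < n" "j < n" for i j
    using that by (auto simp: toeplitz_def fps_one_nth)
  ultimately show ?thesis
    using assms unfolding is_inverse_def by (simp add: sum_toeplitz_mult) (simp add: toeplitz_def)
qed

definition band_coeff :: "real \<Rightarrow> nat \<Rightarrow> nat \<Rightarrow> real" where
  "band_coeff \<gamma> p r = (if r < p then ctil \<gamma> r else 0)"

definition inv_band_coeff :: "real \<Rightarrow> nat \<Rightarrow> nat \<Rightarrow> real" where
  "inv_band_coeff \<gamma> p = fps_nth (inverse (Abs_fps (band_coeff \<gamma> p)))"

definition band_psum :: "real \<Rightarrow> nat \<Rightarrow> nat \<Rightarrow> real" where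
  "band_psum \<gamma> p d = (\<Sum>r\<le>d. band_coeff \<gamma> p r)"

lemma ctil_0 [simp]: "ctil c 0 = 1"
  by (simp add: ctil_def)

lemma band_coeff_0: "0 < p \<Longrightarrow> band_coeff \<gamma> p 0 = 1"
  by (simp add: band_coeff_def)

lemma band_coeff_mult_inv_band_coeff:
  "0 < p \<Longrightarrow> Abs_fps (band_coeff \<gamma> p) * Abs_fps (inv_band_coeff \<gamma> p) = 1"
  by (simp add: inv_band_coeff_def fps_nth_inverse band_coeff_0 inverse_mult_eq_1')

lemma Abs_fps_band_psum: "Abs_fps (band_psum \<gamma> p) = Abs_fps (band_coeff \<gamma> p) * Abs_fps (\<lambda>_. 1)"
  by (rule fps_ext) (simp add: band_psum_def fps_mult_nth atMost_atLeast0)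

lemma Cinv_eq_toeplitz: "0 < p \<Longrightarrow> Cinv n \<gamma> p = toeplitz n (band_coeff \<gamma> p)"
  by (auto simp: fun_eq_iff Cinv_def toeplitz_def band_coeff_def)

lemma Cmat_eq_toeplitz: "0 < p \<Longrightarrow> Cmat n \<gamma> p = toeplitz n (inv_band_coeff \<gamma> p)"
  unfolding Cmat_def Cinv_eq_toeplitz
  by (metis is_inverse_toeplitz band_coeff_mult_inv_band_coeff is_inverse_unique the_equality)

lemma Bmat_eq_toeplitz:
  assumes "0 < p"
  shows "Bmat n \<gamma> p = toeplitz n (band_psum \<gamma> p)"
proof (intro ext)
  fix i j
  have "Emat n = toeplitz n (\<lambda>_. 1)"
    by (auto simp: fun_eq_iff Emat_def toeplitz_def)
  moreover have "Abs_fps (\<lambda>_. 1) * Abs_fps (band_coeff \<gamma> p) = Abs_fps (band_psum \<gamma> p)"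
    by (simp add: Abs_fps_band_psum mult.commute)
  ultimately show "Bmat n \<gamma> p i j = toeplitz n (band_psum \<gamma> p) i j"
    using assms unfolding Bmat_def matmul_def Cinv_eq_toeplitz[OF assms]
    by (simp add: sum_toeplitz_mult del: fps_nth_Abs_fps) (simp add: toeplitz_def)
qed

lemma ctil_Suc: "ctil c (Suc m) = ctil c m * (1 - (c + 1) / real (Suc m))"
proof -
  have h: "real (Suc m) * (c gchoose Suc m) = (c - real m) * (c gchoose m)"
    using gbinomial_mult_1[of c m] by (simp add: algebra_simps)
  have "real (Suc m) * ctil c (Suc m) = - ((-1) ^ m * (real (Suc m) * (c gchoose Suc m)))"
    unfolding ctil_def by simp
  also have "\<dots> = (real m - c) * ctil c m"
    unfolding h ctil_def by (simp add: algebra_simps)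
  finally have "real (Suc m) * ctil c (Suc m) = (real m - c) * ctil c m" .
  moreover have "1 - (c + 1) / real (Suc m) = (real m - c) / real (Suc m)"
    by (simp add: field_simps)
  ultimately show ?thesis by (simp add: field_simps)
qed

lemma sum_ctil: "(\<Sum>r\<le>d. ctil c r) = ctil (c - 1) d"
  using gbinomial_sum_lower_neg[of c d] by (simp add: ctil_def mult.commute)

text \<open>Vandermonde's identity: the sequences \<open>ctil c\<close> and \<open>ctil (-c)\<close> are the coefficients of
  the mutually inverse power series \<open>(1 - x) powr c\<close> and \<open>(1 - x) powr (-c)\<close>.\<close>
lemma sum_ctil_mult_ctil_uminus: "1 \<le> m \<Longrightarrow> (\<Sum>r\<le>m. ctil c r * ctil (-c) (m - r)) = 0"
proof -
  assume m: "1 \<le> m"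
  have "(\<Sum>r\<le>m. ctil c r * ctil (-c) (m - r)) = (-1)^m * (\<Sum>r=0..m. (c gchoose r) * ((-c) gchoose (m - r)))"
    unfolding sum_distrib_left atMost_atLeast0
  proof (intro sum.cong refl)
    fix r assume "r \<in> {0..m}"
    then have "(-1::real)^m = (-1)^r * (-1)^(m - r)" by (simp add: power_add[symmetric])
    then show "ctil c r * ctil (-c) (m - r) = (-1)^m * ((c gchoose r) * ((-c) gchoose (m - r)))"
      by (simp add: ctil_def)
  qed
  also have "\<dots> = (-1)^m * ((c + -c) gchoose m)" by (simp only: gbinomial_Vandermonde)
  also have "\<dots> = 0" using m by (cases m) auto
  finally show ?thesis .
qed

lemma ctil_pred_Suc: "ctil (a - 1) (Suc m) = ctil (a - 1) m * (1 - a / real (Suc m))"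
  using ctil_Suc[of "a - 1" m] by simp

lemma exp_harm_le_powr: "0 \<le> a \<Longrightarrow> exp (- a * harm d) \<le> real (d + 1) powr (- a)"
proof -
  assume "0 \<le> a"
  then have "exp (- a * harm d) \<le> exp (- a * ln (real d + 1))"
    using ln_le_harm[of d] by (simp add: mult_left_mono)
  also have "\<dots> = real (d + 1) powr (- a)" by (simp add: powr_def add.commute)
  finally show ?thesis .
qed

lemma harm_le_ln: "1 \<le> n \<Longrightarrow> harm n \<le> 1 + ln (real n)"
  using euler_mascheroni_sequence_decreasing[of 1 n] by (simp add: harm_expand)

context
  fixes a :: real
  assumes a_pos: "0 < a" and a_less_1: "a < 1"
begin

lemma ctil_pred_factor: "0 < 1 - a / real (Suc m)" "1 - a / real (Suc m) < 1"
  using a_pos a_less_1 by (simp_all add: field_simps)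

lemma ctil_pred_pos: "0 < ctil (a - 1) m"
proof (induction m)
  case (Suc m)
  then show ?case using ctil_pred_factor(1)[of m] by (simp add: ctil_pred_Suc del: of_nat_Suc)
qed simp

lemma ctil_pred_Suc_le: "ctil (a - 1) (Suc m) \<le> ctil (a - 1) m"
  using ctil_pred_factor[of m] ctil_pred_pos[of m] by (simp add: ctil_pred_Suc mult_le_cancel_left1)

lemma ctil_pred_antimono: "i \<le> j \<Longrightarrow> ctil (a - 1) j \<le> ctil (a - 1) i"
  by (induction j rule: dec_induct) (auto intro: order.trans[OF ctil_pred_Suc_le])

lemma ctil_pred_le_exp_harm: "1 \<le> m \<Longrightarrow> ctil (a - 1) m \<le> (1 - a) * exp (- a * (harm m - 1))"
proof (induction m rule: dec_induct)
  case base
  then show ?case by (simp add: ctil_pred_Suc[of a 0, simplified] harm_def)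
next
  case (step m)
  have "ctil (a - 1) (Suc m) \<le> (1 - a) * exp (- a * (harm m - 1)) * exp (- (a / real (Suc m)))"
    unfolding ctil_pred_Suc using step.IH ctil_pred_factor[of m] ctil_pred_pos[of m]
    by (intro mult_mono) (auto simp: exp_ge_add_one_self[of "- _", simplified] 
        intro: order.trans[OF _ exp_ge_add_one_self])
  also have "\<dots> = (1 - a) * exp (- a * (harm (Suc m) - 1))"
    by (simp add: harm_Suc mult.assoc exp_add[symmetric] algebra_simps divide_inverse)
  finally show ?case .
qed

lemma ctil_pred_le_powr': "1 \<le> m \<Longrightarrow> ctil (a - 1) m \<le> (1 - a) * exp a * real (m + 1) powr (- a)"
proof -
  assume m: "1 \<le> m"
  have "(1 - a) * exp (- a * (harm m - 1)) = (1 - a) * exp a * exp (- a * harm m)"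
    by (simp add: mult.assoc exp_add[symmetric] algebra_simps)
  also have "\<dots> \<le> (1 - a) * exp a * real (m + 1) powr (- a)"
    using a_pos a_less_1 exp_harm_le_powr[of a m] by (intro mult_left_mono) auto
  finally show ?thesis using ctil_pred_le_exp_harm[OF m] by linarith
qed

lemma ctil_pred_le_powr: "ctil (a - 1) m \<le> real (m + 1) powr (- a)"
proof (cases "m = 0")
  case False
  have "(1 - a) * exp a \<le> exp (- a) * exp a"
    using exp_ge_add_one_self[of "- a"] by (intro mult_right_mono) auto
  then have "(1 - a) * exp a \<le> 1" by (simp add: exp_minus)
  then have "(1 - a) * exp a * real (m + 1) powr (- a) \<le> real (m + 1) powr (- a)"
    by (intro mult_left_le_one_le) (use a_less_1 in auto)
  then show ?thesis using ctil_pred_le_powr'[of m] False by linarith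
qed simp

lemma ctil_pred_ge_exp_harm: "1 \<le> m \<Longrightarrow> (1 - a) * exp (- a * harm (m - 1)) \<le> ctil (a - 1) m"
proof (induction m rule: dec_induct)
  case base
  then show ?case by (simp add: ctil_pred_Suc[of a 0, simplified] harm_def)
next
  case (step m)
  have m: "0 < real m" using step by simp
  have "exp (- (a / real m)) = 1 / exp (a / real m)" by (simp add: exp_minus field_simps)
  also have "\<dots> \<le> 1 / (1 + a / real m)"
    using a_pos m exp_ge_add_one_self[of "a / real m"]
    by (intro divide_left_mono) (auto intro!: add_pos_pos mult_pos_pos)
  also have "\<dots> \<le> 1 - a / real (Suc m)"
    using a_pos a_less_1 m by (simp add: field_simps)
  finally have e: "exp (- (a / real m)) \<le> 1 - a / real (Suc m)" .
  have "harm m = harm (m - 1) + 1 / real m"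
    using step harm_Suc[of "m - 1"] by (simp add: divide_inverse)
  then have "(1 - a) * exp (- a * harm (Suc m - 1)) = (1 - a) * exp (- a * harm (m - 1)) * exp (- (a / real m))"
    by (simp add: exp_add[symmetric] algebra_simps)
  also have "\<dots> \<le> ctil (a - 1) m * (1 - a / real (Suc m))"
    using step.IH e a_less_1 ctil_pred_pos[of m] by (intro mult_mono) auto
  finally show ?case by (simp add: ctil_pred_Suc)
qed

lemma ctil_pred_ge_powr: "1 \<le> m \<Longrightarrow> (1 - a) * exp (- 1) * real m powr (- a) \<le> ctil (a - 1) m"
proof -
  assume m: "1 \<le> m"
  have h: "harm (m - 1) \<le> 1 + ln (real m)"
  proof (cases "m = 1")
    case False
    then have "harm (m - 1) \<le> 1 + ln (real (m - 1))" using m by (intro harm_le_ln) auto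
    also have "\<dots> \<le> 1 + ln (real m)" using m False by simp
    finally show ?thesis .
  qed (simp add: harm_def)
  have "exp (- 1) * real m powr (- a) \<le> exp (- a) * real m powr (- a)"
    using a_less_1 by (intro mult_right_mono) auto
  also have "\<dots> = exp (- a * (1 + ln (real m)))"
    using m by (simp add: powr_def exp_add[symmetric] algebra_simps)
  also have "\<dots> \<le> exp (- a * harm (m - 1))"
    using h a_pos by simp
  finally have "(1 - a) * (exp (- 1) * real m powr (- a)) \<le> (1 - a) * exp (- a * harm (m - 1))"
    using a_less_1 by (intro mult_left_mono) auto
  then show ?thesis using ctil_pred_ge_exp_harm[OF m] by (simp add: mult.assoc)
qed

end

lemma ctil_nonpos:
  assumes "0 < \<gamma>" "\<gamma> < 1" "1 \<le> r"
  shows "ctil \<gamma> r \<le> 0"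
proof -
  obtain d where r: "r = Suc d" using assms(3) by (cases r) auto
  have "ctil \<gamma> r = ctil (\<gamma> - 1) (Suc d) - ctil (\<gamma> - 1) d"
    unfolding r sum_ctil[symmetric] by simp
  then show ?thesis using ctil_pred_Suc_le[OF assms(1,2), of d] by simp
qed

lemma ctil_uminus_Suc: "ctil (-c) (Suc m) = (\<Sum>r\<le>m. - ctil c (Suc r) * ctil (-c) (m - r))"
  using sum_ctil_mult_ctil_uminus[of "Suc m" c] by (simp add: sum.atMost_Suc_shift sum_negf del: sum.atMost_Suc)

text \<open>Kaluza's theorem: the reciprocal of a power series with positive, log-convex coefficients
  has nonpositive coefficients beyond the constant term.\<close>
lemma kaluza:
  fixes s q :: "nat \<Rightarrow> real"
  assumes pos: "\<And>j. 0 < s j"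
    and ratio_mono: "\<And>i j. i \<le> j \<Longrightarrow> s (Suc i) / s i \<le> s (Suc j) / s j"
    and rec: "\<And>m. 1 \<le> m \<Longrightarrow> s m = (\<Sum>j<m. q (m - j) * s j)"
  shows "1 \<le> m \<Longrightarrow> 0 \<le> q m"
proof (induction m rule: less_induct)
  case (less m)
  show ?case
  proof (cases "m = 1")
    case True
    have "s 1 = q 1 * s 0" using rec[of 1] by simp
    then have "q 1 = s 1 / s 0" using pos[of 0] by (simp add: field_simps)
    then show ?thesis using True pos[of 1] pos[of 0] by simp
  next
    case False
    then obtain m' where m': "m = Suc m'" "1 \<le> m'" using less.prems by (cases m) auto
    define \<rho> where "\<rho> = s (Suc m') / s m'"
    have "s (Suc m') = q (Suc m') * s 0 + (\<Sum>j<m'. q (m' - j) * s (Suc j))"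
      using rec[of "Suc m'"] unfolding sum.lessThan_Suc_shift by simp
    moreover have "s (Suc m') = \<rho> * s m'" using pos[of m'] by (simp add: \<rho>_def)
    also have "\<dots> = (\<Sum>j<m'. q (m' - j) * (\<rho> * s j))"
      using rec[OF m'(2)] by (simp add: sum_distrib_left algebra_simps)
    ultimately have "q (Suc m') * s 0 = (\<Sum>j<m'. q (m' - j) * (\<rho> * s j - s (Suc j)))"
      by (simp add: sum_subtractf right_diff_distrib)
    also have "\<dots> \<ge> 0"
    proof (intro sum_nonneg mult_nonneg_nonneg)
      fix j assume j: "j \<in> {..<m'}"
      show "0 \<le> q (m' - j)" using j m' by (intro less.IH) auto
      have "s (Suc j) / s j \<le> \<rho>" unfolding \<rho>_def using j by (intro ratio_mono) auto
      then show "0 \<le> \<rho> * s j - s (Suc j)" using pos[of j] by (simp add: field_simps)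
    qed
    finally show ?thesis using m' pos[of 0] by (simp add: zero_le_mult_iff)
  qed
qed

lemma block_sum_le:
  fixes u :: "nat \<Rightarrow> real"
  assumes antimono: "\<And>i j. i \<le> j \<Longrightarrow> u j \<le> u i"
  shows "J * b \<le> i \<Longrightarrow> real b * (\<Sum>j<J. u (i - j * b)) \<le> (\<Sum>q\<in>{i + 1 - J * b..<i + 1}. u q)"
proof (induction J)
  case (Suc J)
  have "real b * u (i - J * b) = (\<Sum>q\<in>{i + 1 - Suc J * b..<i + 1 - J * b}. u (i - J * b))"
    using Suc.prems by simp
  also have "\<dots> \<le> (\<Sum>q\<in>{i + 1 - Suc J * b..<i + 1 - J * b}. u q)"
    by (intro sum_mono antimono) auto
  finally have "real b * (\<Sum>j<Suc J. u (i - j * b)) \<le>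
      (\<Sum>q\<in>{i + 1 - J * b..<i + 1}. u q) + (\<Sum>q\<in>{i + 1 - Suc J * b..<i + 1 - J * b}. u q)"
    using Suc by (simp add: algebra_simps)
  also have "\<dots> = (\<Sum>q\<in>{i + 1 - Suc J * b..<i + 1}. u q)"
    using sum.atLeastLessThan_concat[of "i + 1 - Suc J * b" "i + 1 - J * b" "i + 1" u] Suc.prems
    by (simp add: add.commute)
  finally show ?case .
qed simp

lemma sum_shifted_le:
  fixes u :: "nat \<Rightarrow> real"
  assumes "\<And>m. 0 \<le> u m"
  shows "(\<Sum>i<n. if s \<le> i then u (i - s) else 0) \<le> (\<Sum>m<n. u m)"
proof -
  have "(\<Sum>i<n. if s \<le> i then u (i - s) else 0) = (\<Sum>i\<in>{i\<in>{..<n}. s \<le> i}. u (i - s))"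
    by (rule sum.inter_filter[symmetric]) simp
  also have "\<dots> = (\<Sum>m\<in>(\<lambda>i. i - s) ` {i\<in>{..<n}. s \<le> i}. u m)"
    by (subst sum.reindex) (auto simp: inj_on_def)
  also have "\<dots> \<le> (\<Sum>m<n. u m)"
    using assms by (intro sum_mono2) auto
  finally show ?thesis .
qed

definition last_col :: "nat \<Rightarrow> nat \<Rightarrow> nat \<Rightarrow> nat" where
  "last_col k b i = min (k - 1) (i div b)"

lemma last_col_mult_le: "last_col k b i * b \<le> i"
proof -
  have "last_col k b i * b \<le> i div b * b" unfolding last_col_def by (intro mult_le_mono1) simp
  then show ?thesis using div_times_less_eq_dividend[of i b] by linarith
qed

lemma last_col_less: "1 \<le> k \<Longrightarrow> last_col k b i < k"
  by (simp add: last_col_def)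

lemma column_sum_split:
  fixes u :: "nat \<Rightarrow> real"
  assumes "1 \<le> b" "1 \<le> k"
  shows "(\<Sum>j<k. if j * b \<le> i then u (i - j * b) else 0) =
    u (i - last_col k b i * b) + (\<Sum>j<last_col k b i. u (i - j * b))"
proof -
  have "{j\<in>{..<k}. j * b \<le> i} = {..last_col k b i}"
  proof (intro set_eqI iffI)
    fix j assume "j \<in> {j\<in>{..<k}. j * b \<le> i}"
    then show "j \<in> {..last_col k b i}"
      using assms by (auto simp: last_col_def less_eq_div_iff_mult_less_eq)
  next
    fix j assume "j \<in> {..last_col k b i}"
    then show "j \<in> {j\<in>{..<k}. j * b \<le> i}"
      using last_col_mult_le[of k b i] last_col_less[OF assms(2), of b i]
      by (auto intro: order.trans[OF mult_le_mono1])
  qed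
  then show ?thesis
    by (simp add: sum.inter_filter[symmetric] lessThan_Suc_atMost[symmetric])
qed

lemma sum_sq_last_col_le:
  fixes u :: "nat \<Rightarrow> real"
  assumes "1 \<le> k"
  shows "(\<Sum>i<n. (u (i - last_col k b i * b))\<^sup>2) \<le> real k * (\<Sum>m<n. (u m)\<^sup>2)"
proof -
  have inj: "inj_on (\<lambda>i. (last_col k b i, i - last_col k b i * b)) {..<n}"
    by (rule inj_onI) (metis Pair_inject last_col_mult_le le_add_diff_inverse2)
  have "(\<Sum>i<n. (u (i - last_col k b i * b))\<^sup>2) =
      (\<Sum>z\<in>(\<lambda>i. (last_col k b i, i - last_col k b i * b)) ` {..<n}. (case z of (j, m) \<Rightarrow> (u m)\<^sup>2))"
    by (simp add: sum.reindex[OF inj])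
  also have "\<dots> \<le> (\<Sum>z\<in>{..<k} \<times> {..<n}. (case z of (j, m) \<Rightarrow> (u m)\<^sup>2))"
    using last_col_less[OF assms] by (intro sum_mono2) auto
  also have "\<dots> = real k * (\<Sum>m<n. (u m)\<^sup>2)"
    by (simp add: sum.cartesian_product[symmetric])
  finally show ?thesis .
qed

text \<open>Splitting each column sum \<open>v i\<close> into its last term \<open>x i\<close> and the rest \<open>r i\<close>: by
  monotonicity each of the \<open>b\<close> entries of a block dominates a term of \<open>r i\<close>, so \<open>r i \<le> U / b\<close>,
  and \<open>v\<^sup>2 \<le> x\<^sup>2 + 2 r v\<close>.\<close>
lemma column_sums_sq_le:
  fixes u :: "nat \<Rightarrow> real"
  assumes nonneg: "\<And>m. 0 \<le> u m" and antimono: "\<And>i j. i \<le> j \<Longrightarrow> u j \<le> u i"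
    and b: "1 \<le> b" and k: "1 \<le> k"
  shows "(\<Sum>i<n. (\<Sum>j<k. if j * b \<le> i then u (i - j * b) else 0)\<^sup>2)
         \<le> real k * (\<Sum>m<n. (u m)\<^sup>2) + 2 * real k * (\<Sum>m<n. u m)\<^sup>2 / real b"
proof -
  define U where "U = (\<Sum>m<n. u m)"
  define v where "v i = (\<Sum>j<k. if j * b \<le> i then u (i - j * b) else 0)" for i
  define x where "x i = u (i - last_col k b i * b)" for i
  define r where "r i = (\<Sum>j<last_col k b i. u (i - j * b))" for i
  have v_eq: "v i = x i + r i" for i
    unfolding v_def x_def r_def using b k by (rule column_sum_split)
  have r_nonneg: "0 \<le> r i" for i
    unfolding r_def using nonneg by (simp add: sum_nonneg)
  have r_le: "r i \<le> U / real b" if "i < n" for i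
  proof -
    have "real b * r i \<le> (\<Sum>q\<in>{i + 1 - last_col k b i * b..<i + 1}. u q)"
      unfolding r_def by (rule block_sum_le[OF antimono last_col_mult_le])
    also have "\<dots> \<le> U" unfolding U_def using that nonneg by (intro sum_mono2) auto
    finally show ?thesis using b by (simp add: field_simps)
  qed
  have sum_v: "(\<Sum>i<n. v i) \<le> real k * U"
  proof -
    have "(\<Sum>i<n. v i) = (\<Sum>j<k. \<Sum>i<n. if j * b \<le> i then u (i - j * b) else 0)"
      unfolding v_def by (rule sum.swap)
    also have "\<dots> \<le> (\<Sum>j<k. U)"
      unfolding U_def by (intro sum_mono sum_shifted_le nonneg)
    finally show ?thesis by simp
  qed
  have "(v i)\<^sup>2 \<le> (x i)\<^sup>2 + 2 * (U / real b * v i)" if "i < n" for i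
  proof -
    have "(v i)\<^sup>2 \<le> (x i)\<^sup>2 + 2 * (r i * v i)"
      unfolding v_eq using nonneg[of "i - last_col k b i * b"] r_nonneg[of i]
      by (simp add: x_def power2_eq_square algebra_simps)
    moreover have "r i * v i \<le> U / real b * v i"
      using r_le[OF that] r_nonneg[of i] nonneg[of "i - last_col k b i * b"]
      by (intro mult_right_mono) (simp_all add: v_eq x_def)
    ultimately show ?thesis by linarith
  qed
  then have "(\<Sum>i<n. (v i)\<^sup>2) \<le> (\<Sum>i<n. (x i)\<^sup>2 + 2 * (U / real b * v i))"
    by (intro sum_mono) simp
  also have "\<dots> = (\<Sum>i<n. (x i)\<^sup>2) + 2 * (U / real b) * (\<Sum>i<n. v i)"
    by (simp add: sum.distrib sum_distrib_left mult.assoc)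
  also have "\<dots> \<le> real k * (\<Sum>m<n. (u m)\<^sup>2) + 2 * (U / real b) * (real k * U)"
    unfolding x_def using sum_v sum_sq_last_col_le[OF k] nonneg b
    by (intro add_mono mult_left_mono) (auto simp: U_def sum_nonneg)
  finally show ?thesis by (simp add: v_def U_def power2_eq_square mult_ac)
qed

lemma powr_pred_le_diff_powr:
  fixes x \<beta> :: real
  assumes "\<beta> \<noteq> 0" "\<beta> < 1" "1 < x"
  shows "x powr (\<beta> - 1) \<le> (x powr \<beta> - (x - 1) powr \<beta>) / \<beta>"
proof -
  have "\<exists>\<xi>. x - 1 < \<xi> \<and> \<xi> < x \<and> x powr \<beta> - (x - 1) powr \<beta> = (x - (x - 1)) * (\<beta> * \<xi> powr (\<beta> - 1))"
    using assms by (intro MVT2) (auto intro!: has_real_derivative_powr)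
  then obtain \<xi> where \<xi>: "x - 1 < \<xi>" "\<xi> < x" "x powr \<beta> - (x - 1) powr \<beta> = \<beta> * \<xi> powr (\<beta> - 1)"
    by auto
  have "x powr (\<beta> - 1) \<le> \<xi> powr (\<beta> - 1)" using \<xi> assms by (intro powr_mono2') auto
  then show ?thesis using \<xi>(3) assms(1) by simp
qed

lemma sum_powr_le:
  fixes \<beta> :: real
  assumes "\<beta> \<noteq> 0" "\<beta> < 1"
  shows "1 \<le> N \<Longrightarrow> (\<Sum>j\<in>{2..N}. real j powr (\<beta> - 1)) \<le> (real N powr \<beta> - 1) / \<beta>"
proof (induction N rule: dec_induct)
  case (step N)
  have "(\<Sum>j\<in>{2..Suc N}. real j powr (\<beta> - 1)) = (\<Sum>j\<in>{2..N}. real j powr (\<beta> - 1)) + real (Suc N) powr (\<beta> - 1)"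
    using step by simp
  also have "\<dots> \<le> (real N powr \<beta> - 1) / \<beta> + (real (Suc N) powr \<beta> - real N powr \<beta>) / \<beta>"
    using step powr_pred_le_diff_powr[OF assms, of "real (Suc N)"] by (intro add_mono) auto
  also have "\<dots> = (real (Suc N) powr \<beta> - 1) / \<beta>" by (simp add: diff_divide_distrib)
  finally show ?case .
qed simp

lemma sum_powr_le_pos:
  fixes \<beta> :: real
  assumes "0 < \<beta>" "\<beta> < 1" "1 \<le> N"
  shows "(\<Sum>j\<in>{1..N}. real j powr (\<beta> - 1)) \<le> real N powr \<beta> / \<beta>"
proof -
  have "{1..N} = insert 1 {2..N}" using assms(3) by auto
  then have "(\<Sum>j\<in>{1..N}. real j powr (\<beta> - 1)) \<le> 1 + (real N powr \<beta> - 1) / \<beta>"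
    using sum_powr_le[of \<beta> N] assms by simp
  also have "\<dots> \<le> real N powr \<beta> / \<beta>"
    using assms by (simp add: field_simps)
  finally show ?thesis .
qed

lemma sum_powr_le_neg:
  fixes \<beta> :: real
  assumes "\<beta> < 0"
  shows "(\<Sum>j\<in>{2..N}. real j powr (\<beta> - 1)) \<le> 1 / (- \<beta>)"
proof (cases "N = 0")
  case False
  have "(\<Sum>j\<in>{2..N}. real j powr (\<beta> - 1)) \<le> (1 - real N powr \<beta>) / (- \<beta>)"
    using sum_powr_le[of \<beta> N] assms False by (simp add: diff_divide_distrib)
  also have "\<dots> \<le> 1 / (- \<beta>)" using assms by (intro divide_right_mono) auto
  finally show ?thesis .
qed (use assms in simp)

lemma sum_comp_inj_le:
  fixes g :: "'b \<Rightarrow> real"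
  assumes "inj_on \<phi> A" "\<phi> ` A \<subseteq> B" "finite B" "\<And>x. x \<in> B \<Longrightarrow> 0 \<le> g x"
  shows "(\<Sum>a\<in>A. g (\<phi> a)) \<le> (\<Sum>x\<in>B. g x)"
proof -
  have "(\<Sum>a\<in>A. g (\<phi> a)) = (\<Sum>x\<in>\<phi> ` A. g x)" using assms(1) by (simp add: sum.reindex)
  also have "\<dots> \<le> (\<Sum>x\<in>B. g x)" using assms by (intro sum_mono2) auto
  finally show ?thesis .
qed

lemma frob_toeplitz_sq_le: "(frob n (toeplitz n f))\<^sup>2 \<le> real n * (\<Sum>d<n. (f d)\<^sup>2)"
proof -
  have "(frob n (toeplitz n f))\<^sup>2 = (\<Sum>i<n. \<Sum>j<n. (toeplitz n f i j)\<^sup>2)"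
    unfolding frob_def by (simp add: sum_nonneg)
  also have "\<dots> \<le> (\<Sum>i<n. \<Sum>d<n. (f d)\<^sup>2)"
  proof (rule sum_mono)
    fix i assume i: "i \<in> {..<n}"
    have "(\<Sum>j<n. (toeplitz n f i j)\<^sup>2) = (\<Sum>j\<in>{j\<in>{..<n}. j \<le> i}. (f (i - j))\<^sup>2)"
      using i by (subst sum.inter_filter) (auto intro!: sum.cong simp: toeplitz_def)
    also have "\<dots> \<le> (\<Sum>d<n. (f d)\<^sup>2)"
      using i by (intro sum_comp_inj_le) (auto simp: inj_on_def)
    finally show "(\<Sum>j<n. (toeplitz n f i j)\<^sup>2) \<le> (\<Sum>d<n. (f d)\<^sup>2)" .
  qed
  finally show ?thesis by simp
qed

lemma rmse_nonneg: "0 \<le> rmse n k b B C"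
  unfolding rmse_def frob_def sens_def by (simp add: sum_nonneg)

lemma sens_toeplitz_sq:
  "(sens n k b (toeplitz n f))\<^sup>2 = (\<Sum>i<n. (\<Sum>j<k. if j * b \<le> i then f (i - j * b) else 0)\<^sup>2)"
proof -
  have "toeplitz n f i (j * b) = (if j * b \<le> i then f (i - j * b) else 0)" if "i < n" for i j
    using that by (simp add: toeplitz_def)
  then show ?thesis unfolding sens_def by (simp add: sum_nonneg)
qed

lemma le_sum_sqrt_if_sq_le_sum:
  fixes r c A1 A2 A3 A4 :: real
  assumes "0 \<le> r" "0 \<le> c" "0 \<le> A1" "0 \<le> A2" "0 \<le> A3" "0 \<le> A4"
    and "r\<^sup>2 \<le> c\<^sup>2 * (A1 + A2 + A3 + A4)"
  shows "r \<le> c * (sqrt A1 + sqrt A2 + sqrt A3 + sqrt A4)"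
proof (rule power2_le_imp_le)
  have "A1 + A2 + A3 + A4 \<le> (sqrt A1 + sqrt A2 + sqrt A3 + sqrt A4)\<^sup>2"
    using assms(3-6) by (simp add: power2_eq_square algebra_simps)
  then have "c\<^sup>2 * (A1 + A2 + A3 + A4) \<le> c\<^sup>2 * (sqrt A1 + sqrt A2 + sqrt A3 + sqrt A4)\<^sup>2"
    by (intro mult_left_mono) auto
  then show "r\<^sup>2 \<le> (c * (sqrt A1 + sqrt A2 + sqrt A3 + sqrt A4))\<^sup>2"
    using assms(7) by (simp add: power_mult_distrib)
qed (use assms in auto)

lemma product_le_of_bounds:
  fixes P0 H0 W0 \<sigma> P H W s t n k b :: real
  assumes P: "0 \<le> P0" "P0 \<le> P" and H: "0 \<le> H0" "H0 \<le> H" and W: "0 \<le> W0" "W0 \<le> W"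
    and \<sigma>: "0 < \<sigma>" "\<sigma> \<le> s" "1 / \<sigma> \<le> t" and nkb: "0 \<le> n" "0 \<le> k" "0 < b"
  shows "(P0 + n * \<sigma>\<^sup>2) * (k * (H0 + W0 / \<sigma>) + 2 * k / (\<sigma>\<^sup>2 * b))
    \<le> P * k * (H + W * t + 2 * t\<^sup>2 / b) + n * k * (s\<^sup>2 * H + s * W + 2 / b)"
proof -
  have "(1 / \<sigma>)\<^sup>2 / b \<le> t\<^sup>2 / b" using \<sigma> nkb by (intro divide_right_mono power_mono) auto
  moreover have "W0 * (1 / \<sigma>) \<le> W * t" using W \<sigma> by (intro mult_mono) auto
  ultimately have "H0 + W0 * (1 / \<sigma>) + 2 * (1 / \<sigma>)\<^sup>2 / b \<le> H + W * t + 2 * t\<^sup>2 / b"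
    using H by simp
  then have "P0 * k * (H0 + W0 * (1 / \<sigma>) + 2 * (1 / \<sigma>)\<^sup>2 / b) \<le> P * k * (H + W * t + 2 * t\<^sup>2 / b)"
    using P H W \<sigma> nkb by (intro mult_mono mult_right_mono) auto
  moreover have "\<sigma>\<^sup>2 * H0 \<le> s\<^sup>2 * H" using \<sigma> H by (intro mult_mono power_mono) auto
  moreover have "\<sigma> * W0 \<le> s * W" using \<sigma> W by (intro mult_mono) auto
  then have "n * k * (\<sigma>\<^sup>2 * H0 + \<sigma> * W0 + 2 / b) \<le> n * k * (s\<^sup>2 * H + s * W + 2 / b)"
    using \<open>\<sigma>\<^sup>2 * H0 \<le> s\<^sup>2 * H\<close> nkb by (intro mult_left_mono) auto
  moreover have "(P0 + n * \<sigma>\<^sup>2) * (k * (H0 + W0 / \<sigma>) + 2 * k / (\<sigma>\<^sup>2 * b)) =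
      P0 * k * (H0 + W0 * (1 / \<sigma>) + 2 * (1 / \<sigma>)\<^sup>2 / b) + n * k * (\<sigma>\<^sup>2 * H0 + \<sigma> * W0 + 2 / b)"
    using \<sigma> nkb by (simp add: field_simps power2_eq_square)
  ultimately show ?thesis by argo
qed

context
  fixes \<gamma> :: real and p :: nat
  assumes \<gamma>_pos: "0 < \<gamma>" and \<gamma>_less_1: "\<gamma> < 1" and p_pos: "0 < p"
begin

lemma sum_band_coeff_mult_inv_band_coeff:
  "(\<Sum>r\<le>m. band_coeff \<gamma> p r * inv_band_coeff \<gamma> p (m - r)) = (if m = 0 then 1 else 0)"
  using arg_cong[OF band_coeff_mult_inv_band_coeff[OF p_pos], of "\<lambda>f. fps_nth f m"]
  by (simp add: fps_mult_nth atMost_atLeast0 fps_one_nth)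

lemma inv_band_coeff_0 [simp]: "inv_band_coeff \<gamma> p 0 = 1"
  using sum_band_coeff_mult_inv_band_coeff[of 0] by (simp add: band_coeff_0 p_pos)

lemma inv_band_coeff_Suc:
  "inv_band_coeff \<gamma> p (Suc m) = (\<Sum>r\<le>m. - band_coeff \<gamma> p (Suc r) * inv_band_coeff \<gamma> p (m - r))"
  using sum_band_coeff_mult_inv_band_coeff[of "Suc m"]
  by (simp add: sum.atMost_Suc_shift band_coeff_0 p_pos sum_negf del: sum.atMost_Suc)

lemma inv_band_coeff_bounds: "0 \<le> inv_band_coeff \<gamma> p m \<and> inv_band_coeff \<gamma> p m \<le> ctil (-\<gamma>) m"
proof (induction m rule: less_induct)
  case (less m)
  show ?case
  proof (cases m)
    case (Suc m')
    have "0 \<le> - band_coeff \<gamma> p (Suc r) * inv_band_coeff \<gamma> p (m' - r) \<and>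
          - band_coeff \<gamma> p (Suc r) * inv_band_coeff \<gamma> p (m' - r) \<le> - ctil \<gamma> (Suc r) * ctil (-\<gamma>) (m' - r)"
      if "r \<le> m'" for r
    proof -
      have c: "ctil \<gamma> (Suc r) \<le> 0" using ctil_nonpos[OF \<gamma>_pos \<gamma>_less_1] by simp
      have a: "0 \<le> - band_coeff \<gamma> p (Suc r)" "- band_coeff \<gamma> p (Suc r) \<le> - ctil \<gamma> (Suc r)"
        using c by (auto simp: band_coeff_def)
      have u: "0 \<le> inv_band_coeff \<gamma> p (m' - r)" "inv_band_coeff \<gamma> p (m' - r) \<le> ctil (-\<gamma>) (m' - r)"
        using less.IH[of "m' - r"] Suc by auto
      have "- band_coeff \<gamma> p (Suc r) * inv_band_coeff \<gamma> p (m' - r) \<le> - ctil \<gamma> (Suc r) * ctil (-\<gamma>) (m' - r)"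
        using a u c by (intro mult_mono) auto
      then show ?thesis using mult_nonneg_nonneg[OF a(1) u(1)] by blast
    qed
    then show ?thesis
      unfolding Suc inv_band_coeff_Suc ctil_uminus_Suc by (auto intro!: sum_nonneg sum_mono)
  qed simp
qed

lemma inv_band_coeff_nonneg: "0 \<le> inv_band_coeff \<gamma> p m"
  using inv_band_coeff_bounds by blast

lemma inv_band_coeff_le: "inv_band_coeff \<gamma> p m \<le> ctil (-\<gamma>) m"
  using inv_band_coeff_bounds by blast

lemma band_psum_eq: "band_psum \<gamma> p d = ctil (\<gamma> - 1) (min d (p - 1))"
proof -
  have "{r\<in>{..d}. r < p} = {..min d (p - 1)}" using p_pos by auto
  then have "band_psum \<gamma> p d = (\<Sum>r\<le>min d (p - 1). ctil \<gamma> r)"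
    unfolding band_psum_def band_coeff_def by (simp add: sum.inter_filter[symmetric])
  then show ?thesis by (simp add: sum_ctil)
qed

lemma band_psum_pos: "0 < band_psum \<gamma> p d"
  by (simp add: band_psum_eq ctil_pred_pos \<gamma>_pos \<gamma>_less_1)

lemma band_psum_ge: "ctil (\<gamma> - 1) (p - 1) \<le> band_psum \<gamma> p d"
  unfolding band_psum_eq by (intro ctil_pred_antimono \<gamma>_pos \<gamma>_less_1) auto

lemma band_psum_ratio:
  "band_psum \<gamma> p (Suc i) / band_psum \<gamma> p i = (if Suc i \<le> p - 1 then 1 - \<gamma> / real (Suc i) else 1)"
proof (cases "Suc i \<le> p - 1")
  case True
  then show ?thesis using ctil_pred_pos[OF \<gamma>_pos \<gamma>_less_1, of i]
    by (simp add: band_psum_eq ctil_pred_Suc min_absorb1 del: of_nat_Suc)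
next
  case False
  then have "min (Suc i) (p - 1) = min i (p - 1)" by simp
  then show ?thesis using False band_psum_pos[of i] by (simp add: band_psum_eq)
qed

lemma band_psum_ratio_mono:
  "i \<le> j \<Longrightarrow> band_psum \<gamma> p (Suc i) / band_psum \<gamma> p i \<le> band_psum \<gamma> p (Suc j) / band_psum \<gamma> p j"
  unfolding band_psum_ratio using \<gamma>_pos by (auto simp: frac_le intro: divide_left_mono)

lemma sum_inv_band_coeff_mult_band_psum: "(\<Sum>m\<le>N. inv_band_coeff \<gamma> p m * band_psum \<gamma> p (N - m)) = 1"
proof -
  have "Abs_fps (inv_band_coeff \<gamma> p) * Abs_fps (band_psum \<gamma> p) = Abs_fps (\<lambda>_. 1)"
    using band_coeff_mult_inv_band_coeff[OF p_pos]
    by (simp add: Abs_fps_band_psum mult.assoc[symmetric] mult.commute[of "Abs_fps (inv_band_coeff \<gamma> p)"])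
  from arg_cong[OF this, of "\<lambda>f. fps_nth f N"] show ?thesis
    by (simp add: fps_mult_nth atMost_atLeast0)
qed

lemma inv_band_coeff_Suc_le: "inv_band_coeff \<gamma> p (Suc m) \<le> inv_band_coeff \<gamma> p m"
proof -
  define T where "T = (1 - fps_X) * Abs_fps (inv_band_coeff \<gamma> p)"
  have T_nth: "fps_nth T (Suc j) = inv_band_coeff \<gamma> p (Suc j) - inv_band_coeff \<gamma> p j" "fps_nth T 0 = 1" for j
    by (simp_all add: T_def ring_distribs)
  have "Abs_fps (\<lambda>_. 1::real) * (1 - fps_X) = 1"
    using inverse_mult_eq_1'[of "Abs_fps (\<lambda>_. 1::real)"] by (simp add: fps_inverse_gp')
  moreover have "Abs_fps (band_psum \<gamma> p) * T =
      (Abs_fps (band_coeff \<gamma> p) * Abs_fps (inv_band_coeff \<gamma> p)) * (Abs_fps (\<lambda>_. 1) * (1 - fps_X))"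
    unfolding T_def Abs_fps_band_psum by (simp only: ac_simps)
  ultimately have prod: "Abs_fps (band_psum \<gamma> p) * T = 1"
    using band_coeff_mult_inv_band_coeff[OF p_pos] by simp
  have rec: "band_psum \<gamma> p m = (\<Sum>j<m. - fps_nth T (m - j) * band_psum \<gamma> p j)" if "1 \<le> m" for m
  proof -
    have "fps_nth (Abs_fps (band_psum \<gamma> p) * T) m = 0" using prod that by simp
    then have "band_psum \<gamma> p m * fps_nth T 0 + (\<Sum>j<m. band_psum \<gamma> p j * fps_nth T (m - j)) = 0"
      by (simp add: fps_mult_nth atLeast0AtMost lessThan_Suc_atMost[symmetric])
    then show ?thesis by (simp add: T_nth(2) sum_negf algebra_simps)
  qed
  have "0 \<le> - fps_nth T (Suc m)"
    using kaluza[of "band_psum \<gamma> p" "\<lambda>j. - fps_nth T j" "Suc m"] band_psum_pos band_psum_ratio_mono rec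
    by simp
  then show ?thesis by (simp add: T_nth)
qed

lemma inv_band_coeff_antimono: "i \<le> j \<Longrightarrow> inv_band_coeff \<gamma> p j \<le> inv_band_coeff \<gamma> p i"
  by (induction j rule: dec_induct) (auto intro: order.trans[OF inv_band_coeff_Suc_le])

text \<open>Since all partial sums are at least their limit \<open>ctil (\<gamma> - 1) (p - 1)\<close>, the identity
  \<open>sum_inv_band_coeff_mult_band_psum\<close> bounds the total mass of the coefficients.\<close>
lemma sum_inv_band_coeff_le: "(\<Sum>m<N. inv_band_coeff \<gamma> p m) \<le> 1 / ctil (\<gamma> - 1) (p - 1)"
proof (cases N)
  case (Suc M)
  have "ctil (\<gamma> - 1) (p - 1) * (\<Sum>m<N. inv_band_coeff \<gamma> p m) = (\<Sum>m\<le>M. inv_band_coeff \<gamma> p m * ctil (\<gamma> - 1) (p - 1))"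
    by (simp add: Suc lessThan_Suc_atMost sum_distrib_right mult.commute)
  also have "\<dots> \<le> (\<Sum>m\<le>M. inv_band_coeff \<gamma> p m * band_psum \<gamma> p (M - m))"
    by (intro sum_mono mult_left_mono band_psum_ge inv_band_coeff_nonneg)
  also have "\<dots> = 1" by (rule sum_inv_band_coeff_mult_band_psum)
  finally show ?thesis
    using ctil_pred_pos[OF \<gamma>_pos \<gamma>_less_1] by (simp add: field_simps)
qed (use ctil_pred_pos[OF \<gamma>_pos \<gamma>_less_1, of "p - 1"] in simp)


lemma sum_sq_band_psum_le:
  assumes "p \<le> n"
  shows "(\<Sum>d<n. (band_psum \<gamma> p d)\<^sup>2) \<le> (\<Sum>d<p. (ctil (\<gamma> - 1) d)\<^sup>2) + real n * (ctil (\<gamma> - 1) (p - 1))\<^sup>2"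
proof -
  have "(\<Sum>d<n. (band_psum \<gamma> p d)\<^sup>2) = (\<Sum>d<p. (band_psum \<gamma> p d)\<^sup>2) + (\<Sum>d\<in>{p..<n}. (band_psum \<gamma> p d)\<^sup>2)"
    using sum.atLeastLessThan_concat[of 0 p n, symmetric] assms by (simp add: lessThan_atLeast0)
  also have "\<dots> = (\<Sum>d<p. (ctil (\<gamma> - 1) d)\<^sup>2) + (\<Sum>d\<in>{p..<n}. (ctil (\<gamma> - 1) (p - 1))\<^sup>2)"
    using p_pos by (intro arg_cong2[where f = "(+)"] sum.cong) (auto simp: band_psum_eq min_def)
  also have "\<dots> \<le> (\<Sum>d<p. (ctil (\<gamma> - 1) d)\<^sup>2) + real n * (ctil (\<gamma> - 1) (p - 1))\<^sup>2"
    by (simp add: mult_right_mono)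
  finally show ?thesis .
qed

lemma sum_sq_inv_band_coeff_le:
  assumes "p \<le> n"
  shows "(\<Sum>m<n. (inv_band_coeff \<gamma> p m)\<^sup>2) \<le> (\<Sum>m<p. (ctil (-\<gamma>) m)\<^sup>2) + ctil (-\<gamma>) (p - 1) / ctil (\<gamma> - 1) (p - 1)"
proof -
  let ?u = "inv_band_coeff \<gamma> p"
  have "(\<Sum>m<n. (?u m)\<^sup>2) = (\<Sum>m<p. (?u m)\<^sup>2) + (\<Sum>m\<in>{p..<n}. (?u m)\<^sup>2)"
    using sum.atLeastLessThan_concat[of 0 p n, symmetric] assms by (simp add: lessThan_atLeast0)
  also have "(\<Sum>m<p. (?u m)\<^sup>2) \<le> (\<Sum>m<p. (ctil (-\<gamma>) m)\<^sup>2)"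
    by (intro sum_mono power_mono inv_band_coeff_le inv_band_coeff_nonneg)
  also have "(\<Sum>m\<in>{p..<n}. (?u m)\<^sup>2) \<le> (\<Sum>m\<in>{p..<n}. ctil (-\<gamma>) (p - 1) * ?u m)"
  proof (intro sum_mono)
    fix m assume "m \<in> {p..<n}"
    then have "p - 1 \<le> m" by auto
    then have "?u m \<le> ctil (-\<gamma>) (p - 1)"
      using inv_band_coeff_antimono[of "p - 1" m] inv_band_coeff_le[of "p - 1"] by auto
    then show "(?u m)\<^sup>2 \<le> ctil (-\<gamma>) (p - 1) * ?u m"
      using inv_band_coeff_nonneg[of m] by (simp add: power2_eq_square mult_right_mono)
  qed
  also have "\<dots> \<le> ctil (-\<gamma>) (p - 1) * (\<Sum>m<n. ?u m)"
    unfolding sum_distrib_left[symmetric] using ctil_pred_pos[of "1 - \<gamma>" "p - 1"] \<gamma>_pos \<gamma>_less_1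
    by (intro mult_left_mono sum_mono2) (auto simp: inv_band_coeff_nonneg)
  also have "\<dots> \<le> ctil (-\<gamma>) (p - 1) / ctil (\<gamma> - 1) (p - 1)"
    using sum_inv_band_coeff_le[of n] ctil_pred_pos[of "1 - \<gamma>" "p - 1"] \<gamma>_pos \<gamma>_less_1
    by (simp add: mult_left_mono[of _ _ "ctil (-\<gamma>) (p - 1)", simplified] divide_inverse)
  finally show ?thesis by simp
qed

lemma rmse_sq_le:
  assumes "p \<le> n" "1 \<le> k" "1 \<le> b"
  defines "\<sigma> \<equiv> ctil (\<gamma> - 1) (p - 1)"
  shows "(rmse n k b (Bmat n \<gamma> p) (Cmat n \<gamma> p))\<^sup>2 \<le>
    ((\<Sum>d<p. (ctil (\<gamma> - 1) d)\<^sup>2) + real n * \<sigma>\<^sup>2) *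
    (real k * ((\<Sum>m<p. (ctil (-\<gamma>) m)\<^sup>2) + ctil (-\<gamma>) (p - 1) / \<sigma>) + 2 * real k / (\<sigma>\<^sup>2 * real b))"
proof -
  let ?u = "inv_band_coeff \<gamma> p"
  have n: "0 < real n" using assms(1) p_pos by simp
  have \<sigma>: "0 < \<sigma>" unfolding \<sigma>_def using ctil_pred_pos[OF \<gamma>_pos \<gamma>_less_1] .
  have "(\<Sum>m<n. ?u m)\<^sup>2 \<le> (1 / \<sigma>)\<^sup>2"
    using sum_inv_band_coeff_le[of n] by (intro power_mono) (auto simp: \<sigma>_def inv_band_coeff_nonneg sum_nonneg)
  then have "2 * real k * (\<Sum>m<n. ?u m)\<^sup>2 / real b \<le> 2 * real k * (1 / \<sigma>)\<^sup>2 / real b"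
    by (intro divide_right_mono mult_left_mono) auto
  then have "2 * real k * (\<Sum>m<n. ?u m)\<^sup>2 / real b \<le> 2 * real k / (\<sigma>\<^sup>2 * real b)"
    by (simp add: power_divide)
  moreover have "(sens n k b (Cmat n \<gamma> p))\<^sup>2 \<le> real k * (\<Sum>m<n. (?u m)\<^sup>2) + 2 * real k * (\<Sum>m<n. ?u m)\<^sup>2 / real b"
    unfolding Cmat_eq_toeplitz[OF p_pos] sens_toeplitz_sq
    using assms(2,3) by (intro column_sums_sq_le inv_band_coeff_nonneg inv_band_coeff_antimono)
  moreover have "real k * (\<Sum>m<n. (?u m)\<^sup>2) \<le> real k * ((\<Sum>m<p. (ctil (-\<gamma>) m)\<^sup>2) + ctil (-\<gamma>) (p - 1) / \<sigma>)"
    unfolding \<sigma>_def by (intro mult_left_mono sum_sq_inv_band_coeff_le assms(1)) auto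
  ultimately have sens: "(sens n k b (Cmat n \<gamma> p))\<^sup>2 \<le>
      real k * ((\<Sum>m<p. (ctil (-\<gamma>) m)\<^sup>2) + ctil (-\<gamma>) (p - 1) / \<sigma>) + 2 * real k / (\<sigma>\<^sup>2 * real b)"
    by linarith
  have frob: "(frob n (Bmat n \<gamma> p))\<^sup>2 \<le> real n * ((\<Sum>d<p. (ctil (\<gamma> - 1) d)\<^sup>2) + real n * \<sigma>\<^sup>2)"
    unfolding Bmat_eq_toeplitz[OF p_pos] \<sigma>_def
    using frob_toeplitz_sq_le[of n "band_psum \<gamma> p"] sum_sq_band_psum_le[OF assms(1)]
    by (meson mult_left_mono of_nat_0_le_iff order_trans)
  have "(rmse n k b (Bmat n \<gamma> p) (Cmat n \<gamma> p))\<^sup>2 = (frob n (Bmat n \<gamma> p))\<^sup>2 * (sens n k b (Cmat n \<gamma> p))\<^sup>2 / real n"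
    unfolding rmse_def using n by (simp add: power_divide power_mult_distrib)
  also have "\<dots> \<le> real n * ((\<Sum>d<p. (ctil (\<gamma> - 1) d)\<^sup>2) + real n * \<sigma>\<^sup>2) *
      (real k * ((\<Sum>m<p. (ctil (-\<gamma>) m)\<^sup>2) + ctil (-\<gamma>) (p - 1) / \<sigma>) + 2 * real k / (\<sigma>\<^sup>2 * real b)) / real n"
    using frob sens by (intro divide_right_mono mult_mono) (auto simp: sum_nonneg)
  finally show ?thesis using n by simp
qed

lemma rmse_le_of_estimates:
  fixes P H W s t A1 A2 A3 A4 :: real
  assumes "p \<le> n" "1 \<le> k" "1 \<le> b"
    and P: "(\<Sum>d<p. (ctil (\<gamma> - 1) d)\<^sup>2) \<le> P" and H: "(\<Sum>m<p. (ctil (-\<gamma>) m)\<^sup>2) \<le> H"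
    and W: "ctil (-\<gamma>) (p - 1) \<le> W"
    and s: "ctil (\<gamma> - 1) (p - 1) \<le> s" and t: "1 / ctil (\<gamma> - 1) (p - 1) \<le> t"
    and arith: "P * k * (H + W * t + 2 * t\<^sup>2 / b) + real n * k * (s\<^sup>2 * H + s * W + 2 / b)
      \<le> 400 * (A1 + A2 + A3 + A4)"
    and A: "0 \<le> A1" "0 \<le> A2" "0 \<le> A3" "0 \<le> A4"
  shows "rmse n k b (Bmat n \<gamma> p) (Cmat n \<gamma> p) \<le> 20 * (sqrt A1 + sqrt A2 + sqrt A3 + sqrt A4)"
proof (rule le_sum_sqrt_if_sq_le_sum)
  have "(rmse n k b (Bmat n \<gamma> p) (Cmat n \<gamma> p))\<^sup>2 \<le> ((\<Sum>d<p. (ctil (\<gamma> - 1) d)\<^sup>2) + real n * (ctil (\<gamma> - 1) (p - 1))\<^sup>2) *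
      (real k * ((\<Sum>m<p. (ctil (-\<gamma>) m)\<^sup>2) + ctil (-\<gamma>) (p - 1) / ctil (\<gamma> - 1) (p - 1)) +
       2 * real k / ((ctil (\<gamma> - 1) (p - 1))\<^sup>2 * real b))"
    by (rule rmse_sq_le[OF assms(1-3)])
  also have "\<dots> \<le> P * k * (H + W * t + 2 * t\<^sup>2 / b) + real n * k * (s\<^sup>2 * H + s * W + 2 / b)"
    using assms(3) P H W s t ctil_pred_pos[OF \<gamma>_pos \<gamma>_less_1] ctil_pred_pos[of "1 - \<gamma>" "p - 1"] \<gamma>_pos \<gamma>_less_1
    by (intro product_le_of_bounds) (auto simp: sum_nonneg)
  finally show "(rmse n k b (Bmat n \<gamma> p) (Cmat n \<gamma> p))\<^sup>2 \<le> 20\<^sup>2 * (A1 + A2 + A3 + A4)"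
    using arith by simp
qed (use A rmse_nonneg in auto)

end

lemma exp_one_le: "exp (1::real) \<le> 272 / 100"
proof -
  have "exp 1 < exp (ln (272 / 100 :: real))" using ln_272_gt_1 by (simp only: exp_less_cancel_iff)
  then show ?thesis by simp
qed

lemma exp_le_three: "x \<le> 1 \<Longrightarrow> exp x \<le> (3::real)"
  using exp_one_le exp_le_cancel_iff[of x 1] by linarith

context
  fixes \<gamma> :: real and p :: nat
  assumes \<gamma>_pos: "0 < \<gamma>" and \<gamma>_less_1: "\<gamma> < 1" and p_ge_2: "2 \<le> p"
begin

lemma ctil_pred_last_le: "ctil (\<gamma> - 1) (p - 1) \<le> 1 / real p powr \<gamma>"
  using ctil_pred_le_powr[OF \<gamma>_pos \<gamma>_less_1, of "p - 1"] p_ge_2 by (simp add: powr_minus_divide)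

lemma ctil_pred_last_le': "ctil (\<gamma> - 1) (p - 1) \<le> 3 * (1 - \<gamma>) / real p powr \<gamma>"
proof -
  have "ctil (\<gamma> - 1) (p - 1) \<le> (1 - \<gamma>) * exp \<gamma> * real p powr (- \<gamma>)"
    using ctil_pred_le_powr'[OF \<gamma>_pos \<gamma>_less_1, of "p - 1"] p_ge_2 by simp
  also have "\<dots> \<le> (1 - \<gamma>) * 3 * real p powr (- \<gamma>)"
    using exp_le_three[of \<gamma>] \<gamma>_less_1 by (intro mult_right_mono mult_left_mono) auto
  finally show ?thesis by (simp add: powr_minus_divide mult_ac)
qed

lemma inverse_ctil_pred_last_le: "1 / ctil (\<gamma> - 1) (p - 1) \<le> 3 * real p powr \<gamma> / (1 - \<gamma>)"
proof -
  have "1 / 3 \<le> exp (- 1::real)"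
    using exp_le_three[of 1] by (simp add: exp_minus field_simps)
  moreover have "real p powr (- \<gamma>) \<le> real (p - 1) powr (- \<gamma>)"
    using p_ge_2 \<gamma>_pos by (intro powr_mono2') auto
  ultimately have "(1 - \<gamma>) * (1 / 3) * real p powr (- \<gamma>) \<le> (1 - \<gamma>) * exp (- 1) * real (p - 1) powr (- \<gamma>)"
    using \<gamma>_less_1 by (intro mult_mono mult_left_mono) auto
  also have "\<dots> \<le> ctil (\<gamma> - 1) (p - 1)"
    using p_ge_2 by (intro ctil_pred_ge_powr \<gamma>_pos \<gamma>_less_1) auto
  finally have "(1 - \<gamma>) / (3 * real p powr \<gamma>) \<le> ctil (\<gamma> - 1) (p - 1)"
    by (simp add: powr_minus_divide)
  then have "1 / ctil (\<gamma> - 1) (p - 1) \<le> 1 / ((1 - \<gamma>) / (3 * real p powr \<gamma>))"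
    using \<gamma>_less_1 p_ge_2 ctil_pred_pos[OF \<gamma>_pos \<gamma>_less_1, of "p - 1"] by (intro divide_left_mono) auto
  then show ?thesis by simp
qed

lemma ctil_uminus_last_le: "ctil (-\<gamma>) (p - 1) \<le> 3 * \<gamma> * real p powr \<gamma> / real p"
proof -
  have "ctil (-\<gamma>) (p - 1) \<le> \<gamma> * exp (1 - \<gamma>) * real p powr (\<gamma> - 1)"
    using ctil_pred_le_powr'[of "1 - \<gamma>" "p - 1"] \<gamma>_pos \<gamma>_less_1 p_ge_2 by simp
  also have "\<dots> \<le> \<gamma> * 3 * real p powr (\<gamma> - 1)"
    using exp_le_three[of "1 - \<gamma>"] \<gamma>_pos by (intro mult_right_mono mult_left_mono) auto
  finally show ?thesis using p_ge_2 by (simp add: powr_diff mult_ac)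
qed

lemma sum_sq_ctil_pred_le: "(\<Sum>d<p. (ctil (\<gamma> - 1) d)\<^sup>2) \<le> (\<Sum>j\<in>{1..p}. real j powr (- 2 * \<gamma>))"
proof -
  have "(\<Sum>d<p. (ctil (\<gamma> - 1) d)\<^sup>2) \<le> (\<Sum>d<p. (real (Suc d) powr (- \<gamma>))\<^sup>2)"
    using ctil_pred_le_powr[OF \<gamma>_pos \<gamma>_less_1] ctil_pred_pos[OF \<gamma>_pos \<gamma>_less_1]
    by (intro sum_mono power_mono) (auto simp: less_imp_le)
  also have "\<dots> = (\<Sum>j\<in>{1..p}. real j powr (- 2 * \<gamma>))"
    by (simp add: powr_power sum.atLeast1_atMost_eq)
  finally show ?thesis .
qed

lemma sum_sq_ctil_uminus_le:
  "(\<Sum>m<p. (ctil (-\<gamma>) m)\<^sup>2) \<le> 1 + 8 * \<gamma>\<^sup>2 * (\<Sum>j\<in>{2..p}. real j powr (2 * \<gamma> - 2))"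
proof -
  have "(ctil (-\<gamma>) m)\<^sup>2 \<le> 8 * \<gamma>\<^sup>2 * real (Suc m) powr (2 * \<gamma> - 2)" if "1 \<le> m" for m
  proof -
    have "ctil (-\<gamma>) m \<le> \<gamma> * exp (1 - \<gamma>) * real (m + 1) powr (\<gamma> - 1)"
      using ctil_pred_le_powr'[of "1 - \<gamma>" m] \<gamma>_pos \<gamma>_less_1 that by simp
    also have "\<dots> \<le> \<gamma> * exp 1 * real (m + 1) powr (\<gamma> - 1)"
      using \<gamma>_pos by (intro mult_right_mono mult_left_mono) auto
    finally have "ctil (-\<gamma>) m \<le> \<gamma> * exp 1 * real (m + 1) powr (\<gamma> - 1)" .
    then have "(ctil (-\<gamma>) m)\<^sup>2 \<le> (\<gamma> * exp 1 * real (m + 1) powr (\<gamma> - 1))\<^sup>2"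
      using ctil_pred_pos[of "1 - \<gamma>" m] \<gamma>_pos \<gamma>_less_1 by (intro power_mono) auto
    also have "\<dots> = \<gamma>\<^sup>2 * (exp 1)\<^sup>2 * real (Suc m) powr (2 * \<gamma> - 2)"
      by (simp add: power_mult_distrib powr_power algebra_simps)
    also have "\<dots> \<le> \<gamma>\<^sup>2 * 8 * real (Suc m) powr (2 * \<gamma> - 2)"
      using power_mono[OF exp_one_le, of 2] by (intro mult_right_mono mult_left_mono) (auto simp: power2_eq_square)
    finally show ?thesis by simp
  qed
  then have "(\<Sum>m\<in>{1..<p}. (ctil (-\<gamma>) m)\<^sup>2) \<le> (\<Sum>m\<in>{1..<p}. 8 * \<gamma>\<^sup>2 * real (Suc m) powr (2 * \<gamma> - 2))"
    by (intro sum_mono) auto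
  also have "\<dots> = 8 * \<gamma>\<^sup>2 * (\<Sum>j\<in>{2..p}. real j powr (2 * \<gamma> - 2))"
  proof -
    have "{Suc 1..<Suc p} = {2..p}" by auto
    then have "(\<Sum>j\<in>{2..p}. real j powr (2 * \<gamma> - 2)) = (\<Sum>m\<in>{1..<p}. real (Suc m) powr (2 * \<gamma> - 2))"
      using sum.shift_bounds_Suc_ivl[of "\<lambda>j. real j powr (2 * \<gamma> - 2)" 1 p] by simp
    then show ?thesis by (simp add: sum_distrib_left)
  qed
  moreover have "{..<p} = insert 0 {1..<p}" using p_ge_2 by auto
  ultimately show ?thesis by simp
qed

end

lemma sum_sq_ctil_pred_le_lt_half:
  assumes "0 < \<gamma>" "\<gamma> < 1/2" "2 \<le> p"
  shows "(\<Sum>d<p. (ctil (\<gamma> - 1) d)\<^sup>2) \<le> real p powr (1 - 2 * \<gamma>) / (1 - 2 * \<gamma>)"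
proof -
  have "(\<Sum>d<p. (ctil (\<gamma> - 1) d)\<^sup>2) \<le> (\<Sum>j\<in>{1..p}. real j powr ((1 - 2 * \<gamma>) - 1))"
    using sum_sq_ctil_pred_le[of \<gamma> p] assms by simp
  also have "\<dots> \<le> real p powr (1 - 2 * \<gamma>) / (1 - 2 * \<gamma>)"
    using assms by (intro sum_powr_le_pos) auto
  finally show ?thesis .
qed

lemma sum_sq_ctil_uminus_le_lt_half:
  assumes "0 < \<gamma>" "\<gamma> < 1/2" "2 \<le> p"
  shows "(\<Sum>m<p. (ctil (-\<gamma>) m)\<^sup>2) \<le> 9 / (1 - 2 * \<gamma>)"
proof -
  have "(\<Sum>j\<in>{2..p}. real j powr ((2 * \<gamma> - 1) - 1)) \<le> 1 / (1 - 2 * \<gamma>)"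
    using sum_powr_le_neg[of "2 * \<gamma> - 1" p] assms by simp
  moreover have "8 * \<gamma>\<^sup>2 \<le> 8" and "1 \<le> 1 / (1 - 2 * \<gamma>)"
    using assms by (auto simp: power2_eq_square mult_le_one field_simps)
  ultimately have "1 + 8 * \<gamma>\<^sup>2 * (\<Sum>j\<in>{2..p}. real j powr (2 * \<gamma> - 2)) \<le> 1 + 8 * (1 / (1 - 2 * \<gamma>))"
    by (intro add_left_mono mult_mono) (auto simp: sum_nonneg)
  moreover have "9 / (1 - 2 * \<gamma>) = 9 * (1 / (1 - 2 * \<gamma>))" by simp
  ultimately show ?thesis
    using sum_sq_ctil_uminus_le[of \<gamma> p] assms \<open>1 \<le> 1 / (1 - 2 * \<gamma>)\<close> by argo
qed

lemma bound_lt_half: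
  assumes "0 < \<gamma>" "\<gamma> < 1/2" "0 < p"
  defines "a \<equiv> real p powr \<gamma>" and "\<delta> \<equiv> 1/2 - \<gamma>"
  shows "bound n p k b \<gamma> = sqrt (real k * (real p / a\<^sup>2) / \<delta>\<^sup>2) + sqrt (real n * real k / (\<gamma>\<^sup>2 * real b))
    + sqrt (real k * real p / (\<gamma> * \<delta> * real b)) + sqrt (real n * real k / (a\<^sup>2 * \<delta>))"
proof -
  have \<delta>: "0 < \<delta>" using assms by (simp add: \<delta>_def)
  have "(1/2 - \<gamma>) + (1/2 - \<gamma>) = 1 - \<gamma> - \<gamma>" by simp
  then have "real p / a\<^sup>2 = (real p powr (1/2 - \<gamma>))\<^sup>2"
    using assms by (simp add: a_def power2_eq_square powr_add[symmetric] powr_diff)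
  then have "sqrt (real k * (real p / a\<^sup>2) / \<delta>\<^sup>2) = sqrt (real k) * real p powr (1/2 - \<gamma>) / (1/2 - \<gamma>)"
    using \<delta> by (simp add: real_sqrt_mult real_sqrt_divide \<delta>_def)
  moreover have "sqrt (real n * real k / (\<gamma>\<^sup>2 * real b)) = 1 / \<gamma> * sqrt (real n * real k / real b)"
    using assms by (simp add: real_sqrt_mult real_sqrt_divide)
  moreover have "sqrt (real n * real k / (a\<^sup>2 * \<delta>)) = real p powr (- \<gamma>) * sqrt (real n * real k / (1/2 - \<gamma>))"
    using assms by (simp add: real_sqrt_mult real_sqrt_divide a_def \<delta>_def powr_minus_divide)
  ultimately show ?thesis using assms by (simp add: bound_def \<delta>_def)
qed

lemma lt_half_arith:
  fixes \<gamma> \<delta> a p n k b :: real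
  assumes \<gamma>: "0 < \<gamma>" "\<gamma> < 1/2" and \<delta>: "\<delta> = 1/2 - \<gamma>" and a: "0 < a" "a\<^sup>2 \<le> p"
    and nkb: "0 \<le> n" "0 \<le> k" "1 \<le> b"
  shows "p / a\<^sup>2 / (2 * \<delta>) * k * (9 / (2 * \<delta>) + 3 * \<gamma> * a / p * (6 * a) + 2 * (6 * a)\<^sup>2 / b)
      + n * k * ((1 / a)\<^sup>2 * (9 / (2 * \<delta>)) + 1 / a * (3 * \<gamma> * a / p) + 2 / b)
    \<le> 400 * (k * (p / a\<^sup>2) / \<delta>\<^sup>2 + n * k / (\<gamma>\<^sup>2 * b) + k * p / (\<gamma> * \<delta> * b) + n * k / (a\<^sup>2 * \<delta>))"
proof -
  have d: "0 < \<delta>" "\<delta> \<le> 1/2" and p: "0 < p" and pa: "1 \<le> p / a\<^sup>2"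
    using \<gamma> \<delta> a by (auto simp: field_simps intro: order.strict_trans2[OF zero_less_power])
  have eq1: "p / a\<^sup>2 / (2 * \<delta>) * k * (9 / (2 * \<delta>) + 3 * \<gamma> * a / p * (6 * a) + 2 * (6 * a)\<^sup>2 / b)
      = 9/4 * (k * (p / a\<^sup>2) / \<delta>\<^sup>2) + 9 * (\<gamma> * (k / \<delta>)) + 36 * (k * p / (\<delta> * b))"
    using d a p nkb by (simp add: field_simps power2_eq_square)
  have i1: "\<gamma> * (k / \<delta>) \<le> k * (p / a\<^sup>2) / \<delta>\<^sup>2"
  proof -
    have "\<gamma> * (k / \<delta>) \<le> k / \<delta>" using \<gamma> d nkb by (intro mult_left_le_one_le) auto
    also have "\<dots> \<le> k / \<delta>\<^sup>2" using d nkb by (intro divide_left_mono) (auto simp: power2_eq_square)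
    also have "\<dots> \<le> k * (p / a\<^sup>2) / \<delta>\<^sup>2"
      using mult_left_mono[OF pa, of k] nkb d by (intro divide_right_mono) auto
    finally show ?thesis .
  qed
  have i2: "k * p / (\<delta> * b) \<le> k * p / (\<gamma> * \<delta> * b)"
    using \<gamma> d p nkb by (intro divide_left_mono) (auto simp: mult_le_cancel_right1)
  have eq2: "n * k * ((1 / a)\<^sup>2 * (9 / (2 * \<delta>)) + 1 / a * (3 * \<gamma> * a / p) + 2 / b)
      = 9/2 * (n * k / (a\<^sup>2 * \<delta>)) + 3 * (\<gamma> * (n * k / p)) + 2 * (n * k / b)"
    using d a p nkb by (simp add: field_simps power2_eq_square)
  have i3: "\<gamma> * (n * k / p) \<le> n * k / (a\<^sup>2 * \<delta>)"
  proof -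
    have "\<gamma> * (n * k / p) \<le> n * k / p" using \<gamma> p nkb by (intro mult_left_le_one_le) auto
    also have "\<dots> \<le> n * k / (a\<^sup>2 * \<delta>)"
    proof -
      have "a\<^sup>2 * \<delta> \<le> a\<^sup>2" using d by (intro mult_left_le) auto
      then have "a\<^sup>2 * \<delta> \<le> p" using a by linarith
      then show ?thesis using a d p nkb by (intro divide_left_mono) auto
    qed
    finally show ?thesis .
  qed
  have i4: "n * k / b \<le> n * k / (\<gamma>\<^sup>2 * b)"
    using \<gamma> nkb by (intro divide_left_mono) (auto simp: power2_eq_square mult_le_one)
  have "0 \<le> k * (p / a\<^sup>2) / \<delta>\<^sup>2" "0 \<le> n * k / (\<gamma>\<^sup>2 * b)" "0 \<le> k * p / (\<gamma> * \<delta> * b)"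
    "0 \<le> n * k / (a\<^sup>2 * \<delta>)"
    using \<gamma> d p nkb by auto
  then show ?thesis unfolding eq1 eq2 using i1 i2 i3 i4 by argo
qed

lemma rmse_le_bound_lt_half:
  assumes \<gamma>: "0 < \<gamma>" "\<gamma> < 1/2" and p: "2 \<le> p" "p \<le> n" and kb: "1 \<le> k" "1 \<le> b"
  shows "rmse n k b (Bmat n \<gamma> p) (Cmat n \<gamma> p) \<le> 20 * bound n p k b \<gamma>"
proof -
  define a where "a = real p powr \<gamma>"
  define \<delta> where "\<delta> = 1/2 - \<gamma>"
  have \<gamma>1: "\<gamma> < 1" and p0: "1 < real p" using \<gamma> p by auto
  have a: "0 < a" "a\<^sup>2 \<le> real p" "real p powr (1 - 2 * \<gamma>) = real p / a\<^sup>2"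
    using p0 powr_mono[of "2 * \<gamma>" 1 "real p"] \<gamma> by (simp_all add: a_def powr_power powr_diff)
  have P: "(\<Sum>d<p. (ctil (\<gamma> - 1) d)\<^sup>2) \<le> real p / a\<^sup>2 / (2 * \<delta>)"
    using sum_sq_ctil_pred_le_lt_half[OF \<gamma> p(1)] a(3) by (simp add: \<delta>_def)
  have H: "(\<Sum>m<p. (ctil (-\<gamma>) m)\<^sup>2) \<le> 9 / (2 * \<delta>)"
    using sum_sq_ctil_uminus_le_lt_half[OF \<gamma> p(1)] by (simp add: \<delta>_def)
  have W: "ctil (-\<gamma>) (p - 1) \<le> 3 * \<gamma> * a / real p"
    using ctil_uminus_last_le[OF \<gamma>(1) \<gamma>1 p(1)] by (simp add: a_def)
  have s: "ctil (\<gamma> - 1) (p - 1) \<le> 1 / a"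
    using ctil_pred_last_le[OF \<gamma>(1) \<gamma>1 p(1)] by (simp add: a_def)
  have "3 * a / (1 - \<gamma>) \<le> 6 * a" using a \<gamma> by (simp add: field_simps)
  then have t: "1 / ctil (\<gamma> - 1) (p - 1) \<le> 6 * a"
    using inverse_ctil_pred_last_le[OF \<gamma>(1) \<gamma>1 p(1)] by (simp add: a_def)
  have "0 < p" using p by simp
  then show ?thesis
    unfolding bound_lt_half[OF \<gamma> \<open>0 < p\<close>] a_def[symmetric] \<delta>_def[symmetric]
    using \<gamma> a kb by (intro rmse_le_of_estimates[OF \<gamma>(1) \<gamma>1 _ p(2) kb P H W s t] lt_half_arith)
      (auto simp: \<delta>_def)
qed

lemma sum_powr_minus_one_le: "1 \<le> p \<Longrightarrow> (\<Sum>j\<in>{1..p}. real j powr (- 1)) \<le> 1 + ln (real p)"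
  using harm_le_ln[of p] by (simp add: harm_def powr_minus_divide divide_inverse)

lemma sum_sq_ctil_pred_le_half: "2 \<le> p \<Longrightarrow> (\<Sum>d<p. (ctil (- 1/2) d)\<^sup>2) \<le> 1 + ln (real p)"
  using sum_sq_ctil_pred_le[of "1/2" p] sum_powr_minus_one_le[of p] by simp

lemma sum_sq_ctil_uminus_le_half: "2 \<le> p \<Longrightarrow> (\<Sum>m<p. (ctil (- 1/2) m)\<^sup>2) \<le> 3 + 2 * ln (real p)"
proof -
  assume p: "2 \<le> p"
  have "(\<Sum>j\<in>{2..p}. real j powr (- 1)) \<le> (\<Sum>j\<in>{1..p}. real j powr (- 1))"
    by (intro sum_mono2) auto
  then show ?thesis
    using sum_sq_ctil_uminus_le[of "1/2" p] sum_powr_minus_one_le[of p] p by (simp add: power2_eq_square)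
qed

lemma bound_eq_half:
  "0 < p \<Longrightarrow> bound n p k b (1/2) = sqrt (real k * (ln (real p))\<^sup>2) + sqrt (real n * real k / real b)
    + sqrt (real k * real p * ln (real p) / real b) + sqrt (real n * real k * ln (real p) / real p)"
  by (simp add: bound_def real_sqrt_mult)

lemma eq_half_arith:
  fixes L a p n k b :: real
  assumes L: "1/2 \<le> L" and a: "0 < a" "a\<^sup>2 = p" and nkb: "0 \<le> n" "0 \<le> k" "1 \<le> b"
  shows "3 * L * k * (8 * L + 3/2 * a / p * (6 * a) + 2 * (6 * a)\<^sup>2 / b)
      + n * k * ((1 / a)\<^sup>2 * (8 * L) + 1 / a * (3/2 * a / p) + 2 / b)
    \<le> 400 * (k * L\<^sup>2 + n * k / b + k * p * L / b + n * k * L / p)"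
proof -
  have p: "0 < p" using a by auto
  have eq1: "3 * L * k * (8 * L + 3/2 * a / p * (6 * a) + 2 * (6 * a)\<^sup>2 / b)
      = 24 * (k * L\<^sup>2) + 27 * (k * L) + 216 * (k * p * L / b)"
    using a p nkb by (simp add: field_simps power2_eq_square)
  have eq2: "n * k * ((1 / a)\<^sup>2 * (8 * L) + 1 / a * (3/2 * a / p) + 2 / b)
      = 8 * (n * k * L / p) + 3/2 * (n * k / p) + 2 * (n * k / b)"
    using a p nkb by (simp add: field_simps power2_eq_square)
  have "k * L * 1 \<le> k * L * (2 * L)" using L nkb by (intro mult_left_mono) auto
  then have i1: "k * L \<le> 2 * (k * L\<^sup>2)" by (simp add: power2_eq_square mult_ac)
  have "n * k / p * 1 \<le> n * k / p * (2 * L)" using L nkb p by (intro mult_left_mono) auto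
  then have i2: "n * k / p \<le> 2 * (n * k * L / p)" by (simp add: mult_ac)
  have "0 \<le> k * L\<^sup>2" "0 \<le> n * k / b" "0 \<le> k * p * L / b" "0 \<le> n * k * L / p"
    using L nkb p by auto
  then show ?thesis unfolding eq1 eq2 using i1 i2 by argo
qed

lemma rmse_le_bound_eq_half:
  assumes p: "2 \<le> p" "p \<le> n" and kb: "1 \<le> k" "1 \<le> b"
  shows "rmse n k b (Bmat n (1/2) p) (Cmat n (1/2) p) \<le> 20 * bound n p k b (1/2)"
proof -
  define a where "a = sqrt (real p)"
  define L where "L = ln (real p)"
  have p0: "2 \<le> real p" using p by simp
  have a: "0 < a" "a\<^sup>2 = real p" "real p powr (1/2) = a" using p0 by (simp_all add: a_def powr_half_sqrt)
  have "ln 2 \<le> L" using p0 unfolding L_def by simp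
  then have L: "1/2 \<le> L" using ln2_ge_two_thirds by linarith
  have P: "(\<Sum>d<p. (ctil (1/2 - 1) d)\<^sup>2) \<le> 3 * L"
    using sum_sq_ctil_pred_le_half[OF p(1)] L by (simp add: L_def)
  have H: "(\<Sum>m<p. (ctil (- (1/2)) m)\<^sup>2) \<le> 8 * L"
    using sum_sq_ctil_uminus_le_half[OF p(1)] L by (simp add: L_def)
  have W: "ctil (- (1/2)) (p - 1) \<le> 3/2 * a / real p"
    using ctil_uminus_last_le[of "1/2" p] p a(3) by simp
  have s: "ctil (1/2 - 1) (p - 1) \<le> 1 / a"
    using ctil_pred_last_le[of "1/2" p] p a(3) by simp
  have t: "1 / ctil (1/2 - 1) (p - 1) \<le> 6 * a"
    using inverse_ctil_pred_last_le[of "1/2" p] p a(3) by simp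
  have "0 < p" using p by simp
  then show ?thesis
    unfolding bound_eq_half[OF \<open>0 < p\<close>] L_def[symmetric]
    using L a kb by (intro rmse_le_of_estimates[of "1/2" p, OF _ _ _ p(2) kb P H W s t] eq_half_arith) auto
qed

lemma sum_sq_ctil_pred_le_gt_half:
  assumes "1/2 < \<gamma>" "\<gamma> < 1" "2 \<le> p"
  shows "(\<Sum>d<p. (ctil (\<gamma> - 1) d)\<^sup>2) \<le> 1 + 1 / (2 * \<gamma> - 1)"
proof -
  have "{1..p} = insert 1 {2..p}" using assms by auto
  then have "(\<Sum>j\<in>{1..p}. real j powr (- 2 * \<gamma>)) = 1 + (\<Sum>j\<in>{2..p}. real j powr ((1 - 2 * \<gamma>) - 1))"
    by simp
  also have "\<dots> \<le> 1 + 1 / (2 * \<gamma> - 1)"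
    using sum_powr_le_neg[of "1 - 2 * \<gamma>" p] assms by simp
  finally show ?thesis using sum_sq_ctil_pred_le[of \<gamma> p] assms by simp
qed

lemma sum_sq_ctil_uminus_le_gt_half:
  assumes "1/2 < \<gamma>" "\<gamma> < 1" "2 \<le> p"
  shows "(\<Sum>m<p. (ctil (-\<gamma>) m)\<^sup>2) \<le> 1 + 8 * real p powr (2 * \<gamma> - 1) / (2 * \<gamma> - 1)"
proof -
  have "(\<Sum>j\<in>{2..p}. real j powr ((2 * \<gamma> - 1) - 1)) \<le> (real p powr (2 * \<gamma> - 1) - 1) / (2 * \<gamma> - 1)"
    using sum_powr_le[of "2 * \<gamma> - 1" p] assms by simp
  also have "\<dots> \<le> real p powr (2 * \<gamma> - 1) / (2 * \<gamma> - 1)"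
    using assms by (intro divide_right_mono) auto
  finally have "8 * \<gamma>\<^sup>2 * (\<Sum>j\<in>{2..p}. real j powr (2 * \<gamma> - 2)) \<le> 8 * (real p powr (2 * \<gamma> - 1) / (2 * \<gamma> - 1))"
    using assms by (intro mult_mono) (auto simp: power2_eq_square mult_le_one sum_nonneg)
  then show ?thesis using sum_sq_ctil_uminus_le[of \<gamma> p] assms by simp
qed

lemma bound_gt_half:
  assumes "1/2 < \<gamma>" "\<gamma> < 1" "0 < p"
  defines "a \<equiv> real p powr \<gamma>" and "\<delta> \<equiv> \<gamma> - 1/2" and "\<epsilon> \<equiv> 1 - \<gamma>"
  shows "bound n p k b \<gamma> = sqrt (real k * (a\<^sup>2 / real p) / (\<delta>\<^sup>2 * \<epsilon>)) + sqrt (real n * real k / real b)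
    + sqrt (real k * a\<^sup>2 / (\<epsilon>\<^sup>2 * \<delta> * real b)) + sqrt (\<epsilon> * real n * real k / (\<delta> * real p))"
proof -
  have \<delta>\<epsilon>: "0 < \<delta>" "0 < \<epsilon>" using assms by (simp_all add: \<delta>_def \<epsilon>_def)
  have "(\<gamma> - 1/2) + (\<gamma> - 1/2) = \<gamma> + \<gamma> - 1" by simp
  then have "a\<^sup>2 / real p = (real p powr (\<gamma> - 1/2))\<^sup>2"
    using assms by (simp add: a_def power2_eq_square powr_add[symmetric] powr_diff)
  then have "sqrt (real k * (a\<^sup>2 / real p) / (\<delta>\<^sup>2 * \<epsilon>))
      = sqrt (real k) * real p powr (\<gamma> - 1/2) / ((\<gamma> - 1/2) * sqrt (1 - \<gamma>))"
    using \<delta>\<epsilon> by (simp add: real_sqrt_mult real_sqrt_divide \<delta>_def \<epsilon>_def)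
  moreover have "sqrt (real k * a\<^sup>2 / (\<epsilon>\<^sup>2 * \<delta> * real b))
      = sqrt (real k) * real p powr \<gamma> / ((1 - \<gamma>) * sqrt ((\<gamma> - 1/2) * real b))"
    using \<delta>\<epsilon> by (simp add: real_sqrt_mult real_sqrt_divide a_def \<delta>_def \<epsilon>_def)
  moreover have "sqrt (\<epsilon> * real n * real k / (\<delta> * real p)) = sqrt ((1 - \<gamma>) * real n * real k / ((\<gamma> - 1/2) * real p))"
    by (simp add: \<delta>_def \<epsilon>_def)
  ultimately show ?thesis using assms by (simp add: bound_def)
qed

lemma gt_half_arith:
  fixes \<gamma> \<delta> \<epsilon> a p n k b :: real
  assumes \<gamma>: "1/2 < \<gamma>" "\<gamma> < 1" and \<delta>: "\<delta> = \<gamma> - 1/2" and \<epsilon>: "\<epsilon> = 1 - \<gamma>"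
    and a: "0 < a" and p: "0 < p" "p \<le> a\<^sup>2" and nkb: "0 \<le> n" "0 \<le> k" "1 \<le> b"
  shows "1 / \<delta> * k * (9/2 * (a\<^sup>2 / p) / \<delta> + 3 * a / p * (3 * a / \<epsilon>) + 2 * (3 * a / \<epsilon>)\<^sup>2 / b)
      + n * k * ((3 * \<epsilon> / a)\<^sup>2 * (9/2 * (a\<^sup>2 / p) / \<delta>) + 3 * \<epsilon> / a * (3 * a / p) + 2 / b)
    \<le> 400 * (k * (a\<^sup>2 / p) / (\<delta>\<^sup>2 * \<epsilon>) + n * k / b + k * a\<^sup>2 / (\<epsilon>\<^sup>2 * \<delta> * b) + \<epsilon> * n * k / (\<delta> * p))"
proof -
  have d: "0 < \<delta>" "\<delta> \<le> 1/2" and e: "0 < \<epsilon>" "\<epsilon> \<le> 1/2" using \<gamma> \<delta> \<epsilon> by auto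
  have eq1: "1 / \<delta> * k * (9/2 * (a\<^sup>2 / p) / \<delta> + 3 * a / p * (3 * a / \<epsilon>) + 2 * (3 * a / \<epsilon>)\<^sup>2 / b)
      = 9/2 * (k * (a\<^sup>2 / p) / \<delta>\<^sup>2) + 9 * (k * (a\<^sup>2 / p) / (\<delta> * \<epsilon>)) + 18 * (k * a\<^sup>2 / (\<epsilon>\<^sup>2 * \<delta> * b))"
    using d e a p nkb by (simp add: field_simps power2_eq_square)
  have eq2: "n * k * ((3 * \<epsilon> / a)\<^sup>2 * (9/2 * (a\<^sup>2 / p) / \<delta>) + 3 * \<epsilon> / a * (3 * a / p) + 2 / b)
      = 81/2 * (\<epsilon>\<^sup>2 * n * k / (\<delta> * p)) + 9 * (\<epsilon> * n * k / p) + 2 * (n * k / b)"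
    using d e a p nkb by (simp add: field_simps power2_eq_square)
  have "\<delta>\<^sup>2 * \<epsilon> \<le> \<delta>\<^sup>2" "\<delta>\<^sup>2 * \<epsilon> \<le> \<delta> * \<epsilon>" "\<epsilon>\<^sup>2 \<le> \<epsilon>" "\<delta> * p \<le> p"
    using d e p by (auto simp: power2_eq_square intro: mult_left_le mult_right_le_one_le)
  then have "k * (a\<^sup>2 / p) / \<delta>\<^sup>2 \<le> k * (a\<^sup>2 / p) / (\<delta>\<^sup>2 * \<epsilon>)"
    "k * (a\<^sup>2 / p) / (\<delta> * \<epsilon>) \<le> k * (a\<^sup>2 / p) / (\<delta>\<^sup>2 * \<epsilon>)"
    "\<epsilon>\<^sup>2 * n * k / (\<delta> * p) \<le> \<epsilon> * n * k / (\<delta> * p)"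
    "\<epsilon> * n * k / p \<le> \<epsilon> * n * k / (\<delta> * p)"
    using d e a p nkb by (auto intro!: divide_left_mono divide_right_mono mult_right_mono)
  moreover have "0 \<le> k * (a\<^sup>2 / p) / (\<delta>\<^sup>2 * \<epsilon>)" "0 \<le> n * k / b" "0 \<le> k * a\<^sup>2 / (\<epsilon>\<^sup>2 * \<delta> * b)"
    "0 \<le> \<epsilon> * n * k / (\<delta> * p)"
    using d e p nkb by auto
  ultimately show ?thesis unfolding eq1 eq2 by argo
qed

lemma rmse_le_bound_gt_half:
  assumes \<gamma>: "1/2 < \<gamma>" "\<gamma> < 1" and p: "2 \<le> p" "p \<le> n" and kb: "1 \<le> k" "1 \<le> b"
  shows "rmse n k b (Bmat n \<gamma> p) (Cmat n \<gamma> p) \<le> 20 * bound n p k b \<gamma>"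
proof -
  define a where "a = real p powr \<gamma>"
  define \<delta> where "\<delta> = \<gamma> - 1/2"
  define \<epsilon> where "\<epsilon> = 1 - \<gamma>"
  have \<gamma>0: "0 < \<gamma>" and \<delta>: "0 < \<delta>" "\<delta> \<le> 1/2" and p0: "1 < real p"
    using \<gamma> p by (auto simp: \<delta>_def)
  have a: "0 < a" "real p \<le> a\<^sup>2" "real p powr (2 * \<gamma> - 1) = a\<^sup>2 / real p"
    using p0 powr_mono[of 1 "2 * \<gamma>" "real p"] \<gamma> by (simp_all add: a_def powr_power powr_diff)
  have P: "(\<Sum>d<p. (ctil (\<gamma> - 1) d)\<^sup>2) \<le> 1 / \<delta>"
    using sum_sq_ctil_pred_le_gt_half[OF \<gamma> p(1)] \<delta> by (simp add: \<delta>_def field_simps)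
  have "2 * \<delta> * real p \<le> a\<^sup>2" using \<delta> p0 a mult_left_le_one_le[of "real p" "2 * \<delta>"] by argo
  then have "1 \<le> (a\<^sup>2 / real p) / (2 * \<delta>)" using \<delta> p0 by (simp add: field_simps)
  moreover have "8 * real p powr (2 * \<gamma> - 1) / (2 * \<gamma> - 1) = 8 * ((a\<^sup>2 / real p) / (2 * \<delta>))"
    using a(3) by (simp add: \<delta>_def right_diff_distrib)
  moreover have "9/2 * (a\<^sup>2 / real p) / \<delta> = 9 * ((a\<^sup>2 / real p) / (2 * \<delta>))" by simp
  ultimately have H: "(\<Sum>m<p. (ctil (-\<gamma>) m)\<^sup>2) \<le> 9/2 * (a\<^sup>2 / real p) / \<delta>"
    using sum_sq_ctil_uminus_le_gt_half[OF \<gamma> p(1)] by argo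
  have "3 * \<gamma> * a / real p \<le> 3 * a / real p"
    using \<gamma> a p0 by (intro divide_right_mono mult_right_mono) auto
  then have W: "ctil (-\<gamma>) (p - 1) \<le> 3 * a / real p"
    using ctil_uminus_last_le[OF \<gamma>0 \<gamma>(2) p(1)] by (simp add: a_def)
  have s: "ctil (\<gamma> - 1) (p - 1) \<le> 3 * \<epsilon> / a"
    using ctil_pred_last_le'[OF \<gamma>0 \<gamma>(2) p(1)] by (simp add: a_def \<epsilon>_def)
  have t: "1 / ctil (\<gamma> - 1) (p - 1) \<le> 3 * a / \<epsilon>"
    using inverse_ctil_pred_last_le[OF \<gamma>0 \<gamma>(2) p(1)] by (simp add: a_def \<epsilon>_def)
  have "0 < p" using p by simp
  then show ?thesis
    unfolding bound_gt_half[OF \<gamma> \<open>0 < p\<close>] a_def[symmetric] \<delta>_def[symmetric] \<epsilon>_def[symmetric]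
    using \<gamma> a p0 kb \<delta> by (intro rmse_le_of_estimates[OF \<gamma>0 \<gamma>(2) _ p(2) kb P H W s t] gt_half_arith)
      (auto simp: \<delta>_def \<epsilon>_def)
qed

theorem mainTheorem11:
  shows "\<exists>K::real. \<forall>(\<gamma>::real) (n::nat) (p::nat) (k::nat) (b::nat).
     0 < \<gamma> \<and> \<gamma> < 1 \<and> 2 \<le> p \<and> p \<le> n \<and> 1 \<le> k \<and> 1 \<le> b \<and> real k \<le> real n / real b \<longrightarrow>
     rmse n k b (Bmat n \<gamma> p) (Cmat n \<gamma> p) \<le> K * bound n p k b \<gamma>"
proof (intro exI[of _ 20] allI impI)
  fix \<gamma> :: real and n p k b :: nat
  assume "0 < \<gamma> \<and> \<gamma> < 1 \<and> 2 \<le> p \<and> p \<le> n \<and> 1 \<le> k \<and> 1 \<le> b \<and> real k \<le> real n / real b"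
  \<comment> \<open>The bound holds without the hypothesis \<open>real k \<le> real n / real b\<close>.\<close>
  then have \<gamma>: "0 < \<gamma>" "\<gamma> < 1" and params: "2 \<le> p" "p \<le> n" "1 \<le> k" "1 \<le> b" by auto
  consider "\<gamma> < 1/2" | "\<gamma> = 1/2" | "1/2 < \<gamma>" by linarith
  then show "rmse n k b (Bmat n \<gamma> p) (Cmat n \<gamma> p) \<le> 20 * bound n p k b \<gamma>"
  proof cases
    case 1
    then show ?thesis using rmse_le_bound_lt_half \<gamma> params by blast
  next
    case 2
    show ?thesis unfolding 2 by (rule rmse_le_bound_eq_half[OF params])
  next
    case 3
    then show ?thesis using rmse_le_bound_gt_half \<gamma> params by blast
  qed
qed

end
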